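(* In generalized non-signalling theory (box world), let $A_1,A_2,B_1,\ldots,B_n$ be a composite system of boxes in which the boxes $B_1,\ldots,B_n$ are classical (each has exactly one possible input), while $A_1$ and $A_2$ may be non-classical. Then every measurement on this system is either a basic measurement or a probabilistic mixture of basic measurements.
   Context: Box world (GNST): a box is a system with a finite set of inputs (fiducial measurements) $x$ and a finite set of outputs $a$. A system of $n$ boxes has states $\mathbf{p}$ given by all collections of numbers $p(\mathbf{a}|\mathbf{x})=p(a_1,\ldots,a_n|x_1,\ldots,x_n)\ge 0$ (one for each tuple of outputs $\mathbf{a}$ and tuple of inputs $\mathbf{x}$) satisfying normalization $\sum_{\mathbf{a}}p(\mathbf{a}|\mathbf{x})=1$ for all $\mathbf{x}$ and the no-signalling conditions: for each $i$, $\sum_{a_i}p(a_1,\ldots,a_n|x_1,\ldots,x_i,\ldots,x_n)$ does not depend on $x_i$. Reduced states are obtained by summing out outputs. An effect is any linear map $\mu$ from the set of states to $[0,1]$; a vector $\mathbf{R}$ (indexed by pairs $(\mathbf{a},\mathbf{x})$) represents $\mu$ if $\mu(\mathbf{p})=\sum_{\mathbf{a},\mathbf{x}}p(\mathbf{a}|\mathbf{x})R(\mathbf{a}|\mathbf{x})$ for all states $\mathbf{p}$. A measurement is a finite set of pairs $(r,\mu_r)$ of outcomes and effects with $\sum_r\mu_r$ equal to the constant map $1$; every such set is an allowed measurement. A basic measurement is one performed as follows: choose a box and an input for it and observe its output; based on the outputs obtained so far, choose a not-yet-measured box and an input for it; repeat until all boxes are measured; then output $r(\mathbf{a})$, a deterministic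 function of the full output tuple $\mathbf{a}$. Its effect for outcome $\hat r$ is represented by the vector with $R(\mathbf{a}|\mathbf{x})=1$ if $r(\mathbf{a})=\hat r$ and $\mathbf{x}=\mathbf{x}(\mathbf{a})$ (the inputs used when outputs $\mathbf{a}$ occur), and $0$ otherwise. A measurement $\{(r,\mu_r)\}$ is a mixture of basic measurements if there are basic measurements $\{(r,\mu^{(j)}_r)\}$ and probabilities $q_j$ with $\mu_r=\sum_j q_j\mu^{(j)}_r$ for all $r$. *)

theory Defs
  imports Complex_Main "HOL-Library.FuncSet"
begin

text \<open>A system of m boxes, indexed 0..m-1. Box i has inputs {..<nx i} and outputs
 {..<na i}. Tuples of inputs/outputs are extensional functions on {..<m}.
 A state is a function p with p a x = p(a|x).\<close>

type_synonym tuple = "nat \<Rightarrow> nat"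
type_synonym state = "tuple \<Rightarrow> tuple \<Rightarrow> real"

definition outs :: "nat \<Rightarrow> (nat \<Rightarrow> nat) \<Rightarrow> tuple set" where
  "outs m na = PiE {..<m} (\<lambda>i. {..<na i})"

definition ins :: "nat \<Rightarrow> (nat \<Rightarrow> nat) \<Rightarrow> tuple set" where
  "ins m nx = PiE {..<m} (\<lambda>i. {..<nx i})"

definition is_state :: "nat \<Rightarrow> (nat \<Rightarrow> nat) \<Rightarrow> (nat \<Rightarrow> nat) \<Rightarrow> state \<Rightarrow> bool" where
  "is_state m nx na p \<longleftrightarrow>
     (\<forall>a\<in>outs m na. \<forall>x\<in>ins m nx. 0 \<le> p a x) \<and>
     (\<forall>x\<in>ins m nx. (\<Sum>a\<in>outs m na. p a x) = 1) \<and>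
     (\<forall>i<m. \<forall>x\<in>ins m nx. \<forall>y<nx i. \<forall>a\<in>outs m na.
        (\<Sum>b<na i. p (a(i := b)) x) = (\<Sum>b<na i. p (a(i := b)) (x(i := y))))"

definition states :: "nat \<Rightarrow> (nat \<Rightarrow> nat) \<Rightarrow> (nat \<Rightarrow> nat) \<Rightarrow> state set" where
  "states m nx na = {p. is_state m nx na p}"

definition is_effect :: "nat \<Rightarrow> (nat \<Rightarrow> nat) \<Rightarrow> (nat \<Rightarrow> nat) \<Rightarrow> (state \<Rightarrow> real) \<Rightarrow> bool" where
  "is_effect m nx na e \<longleftrightarrow>
     (\<exists>R :: tuple \<Rightarrow> tuple \<Rightarrow> real. \<forall>p\<in>states m nx na.
        e p = (\<Sum>a\<in>outs m na. \<Sum>x\<in>ins m nx. p a x * R a x)) \<and>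
     (\<forall>p\<in>states m nx na. 0 \<le> e p \<and> e p \<le> 1)"

definition is_measurement :: "nat \<Rightarrow> (nat \<Rightarrow> nat) \<Rightarrow> (nat \<Rightarrow> nat) \<Rightarrow> 'r set
    \<Rightarrow> ('r \<Rightarrow> state \<Rightarrow> real) \<Rightarrow> bool" where
  "is_measurement m nx na Out mu \<longleftrightarrow>
     finite Out \<and> (\<forall>r\<in>Out. is_effect m nx na (mu r)) \<and>
     (\<forall>p\<in>states m nx na. (\<Sum>r\<in>Out. mu r p) = 1)"

text \<open>Adaptive strategies. A history is a list of (box, input, output) triples.
 The strategy chooses the next (box, input) from the history so far.\<close>
type_synonym strategy = "(nat \<times> nat \<times> nat) list \<Rightarrow> nat \<times> nat"

fun run :: "strategy \<Rightarrow> tuple \<Rightarrow> nat \<Rightarrow> (nat \<times> nat \<times> nat) list" where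
  "run \<sigma> a 0 = []"
| "run \<sigma> a (Suc k) = (let h = run \<sigma> a k in h @ [(fst (\<sigma> h), snd (\<sigma> h), a (fst (\<sigma> h)))])"

definition valid_strategy :: "nat \<Rightarrow> (nat \<Rightarrow> nat) \<Rightarrow> (nat \<Rightarrow> nat) \<Rightarrow> strategy \<Rightarrow> bool" where
  "valid_strategy m nx na \<sigma> \<longleftrightarrow>
     (\<forall>a\<in>outs m na. \<forall>k<m. let h = run \<sigma> a k in
        fst (\<sigma> h) < m \<and> fst (\<sigma> h) \<notin> fst ` set h \<and> snd (\<sigma> h) < nx (fst (\<sigma> h)))"

definition input_at :: "(nat \<times> nat \<times> nat) list \<Rightarrow> nat \<Rightarrow> nat" where
  "input_at h i = fst (snd (hd (filter (\<lambda>e. fst e = i) h)))"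

definition inputs_used :: "nat \<Rightarrow> strategy \<Rightarrow> tuple \<Rightarrow> tuple" where
  "inputs_used m \<sigma> a = restrict (input_at (run \<sigma> a m)) {..<m}"

definition basic_effect :: "nat \<Rightarrow> (nat \<Rightarrow> nat) \<Rightarrow> (nat \<Rightarrow> nat) \<Rightarrow> strategy
    \<Rightarrow> (tuple \<Rightarrow> 'r) \<Rightarrow> 'r \<Rightarrow> state \<Rightarrow> real" where
  "basic_effect m nx na \<sigma> rf r p =
     (\<Sum>a\<in>outs m na. \<Sum>x\<in>ins m nx.
        p a x * (if rf a = r \<and> x = inputs_used m \<sigma> a then 1 else 0))"

definition is_basic_measurement :: "nat \<Rightarrow> (nat \<Rightarrow> nat) \<Rightarrow> (nat \<Rightarrow> nat) \<Rightarrow> 'r set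
    \<Rightarrow> ('r \<Rightarrow> state \<Rightarrow> real) \<Rightarrow> bool" where
  "is_basic_measurement m nx na Out mu \<longleftrightarrow>
     (\<exists>\<sigma> (rf :: tuple \<Rightarrow> 'r). valid_strategy m nx na \<sigma> \<and> (\<forall>a\<in>outs m na. rf a \<in> Out) \<and>
        (\<forall>r\<in>Out. \<forall>p\<in>states m nx na. mu r p = basic_effect m nx na \<sigma> rf r p))"

definition is_mixture_of_basic :: "nat \<Rightarrow> (nat \<Rightarrow> nat) \<Rightarrow> (nat \<Rightarrow> nat) \<Rightarrow> 'r set
    \<Rightarrow> ('r \<Rightarrow> state \<Rightarrow> real) \<Rightarrow> bool" where
  "is_mixture_of_basic m nx na Out mu \<longleftrightarrow>
     (\<exists>(k::nat) (q :: nat \<Rightarrow> real) (M :: nat \<Rightarrow> 'r \<Rightarrow> state \<Rightarrow> real).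
        (\<forall>j<k. 0 \<le> q j) \<and> (\<Sum>j<k. q j) = 1 \<and>
        (\<forall>j<k. is_basic_measurement m nx na Out (M j)) \<and>
        (\<forall>r\<in>Out. \<forall>p\<in>states m nx na. mu r p = (\<Sum>j<k. q j * M j r p)))"

end

theory Submission
  imports Defs "HOL-Library.Nat_Bijection"
begin

text \<open>Every effect is represented by a nonnegative vector: a vector that is nonnegative on all
  no-signalling states differs from a nonnegative one by a combination of the linear constraints
  defining states, by linear-programming duality (Farkas' lemma, proved here by Fourier--Motzkin
  elimination). Summing these representatives over the outcomes of a measurement gives a
  nonnegative vector \<open>T\<close> that pairs to \<open>1\<close> with every state. Pairing \<open>T\<close> with the deterministic
  local states shows that, for fixed outputs of the classical boxes, \<open>T (a | u, v)\<close> splits into a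
  part independent of the output of the second general box and a part independent of the output
  of the first: the weights of measuring the first general box first (with input \<open>u\<close>) and of
  measuring the second one first (with input \<open>v\<close>). Choosing, independently for every history,
  the first box and its input, then the input of the other box, and finally the outcome at random
  with these weights yields a probability distribution on basic measurements whose average is
  the given measurement.\<close>

section \<open>Farkas' lemma by Fourier--Motzkin elimination\<close>

lemma sum_eq_single:
  fixes f :: "'a \<Rightarrow> 'b::comm_monoid_add"
  assumes "finite A" "u \<in> A" "\<And>u'. u' \<in> A \<Longrightarrow> u' \<noteq> u \<Longrightarrow> f u' = 0"
  shows "sum f A = f u"
  using sum.mono_neutral_right[of A "{u}" f] assms by auto

lemma exists_between_finite:
  fixes l u :: "'a \<Rightarrow> real"
  assumes "finite P" "finite N" "\<And>p q. p \<in> P \<Longrightarrow> q \<in> N \<Longrightarrow> l q \<le> u p"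
  shows "\<exists>t. (\<forall>q\<in>N. l q \<le> t) \<and> (\<forall>p\<in>P. t \<le> u p)"
proof (cases "P = {}")
  case True
  show ?thesis
    by (rule exI[of _ "Max (insert 0 (l ` N))"]) (use True assms in auto)
next
  case False
  show ?thesis
    by (rule exI[of _ "Min (u ` P)"]) (use False assms in auto)
qed

text \<open>Fourier--Motzkin elimination of the variable with coefficient column \<open>c\<close>: row \<open>2 * i\<close>
  of the new system is row \<open>i\<close> (for \<open>c i = 0\<close>), row \<open>2 * prod_encode (p, q) + 1\<close> is
  the positive combination of rows \<open>p\<close> (\<open>c p > 0\<close>) and \<open>q\<close> (\<open>c q < 0\<close>) in which
  the variable cancels.\<close>

definition fm_rows :: "(nat \<Rightarrow> real) \<Rightarrow> nat set \<Rightarrow> nat set" where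
  "fm_rows c I = (\<lambda>i. 2 * i) ` {i\<in>I. c i = 0} \<union>
     (\<lambda>(p, q). 2 * prod_encode (p, q) + 1) ` ({p\<in>I. 0 < c p} \<times> {q\<in>I. c q < 0})"

definition fm_combine ::
    "(nat \<Rightarrow> real) \<Rightarrow> (nat \<Rightarrow> real) \<Rightarrow> nat \<Rightarrow> real" where
  "fm_combine c g r = (if even r then g (r div 2) else
      (case prod_decode (r div 2) of (p, q) \<Rightarrow> - c q * g p + c p * g q))"

definition fm_lift ::
    "(nat \<Rightarrow> real) \<Rightarrow> nat set \<Rightarrow> (nat \<Rightarrow> real) \<Rightarrow> nat \<Rightarrow> real" where
  "fm_lift c I w i =
     (if c i = 0 then w (2 * i)
      else if 0 < c i then (\<Sum>q\<in>{q\<in>I. c q < 0}. w (2 * prod_encode (i, q) + 1) * - c q)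
      else (\<Sum>p\<in>{p\<in>I. 0 < c p}. w (2 * prod_encode (p, i) + 1) * c p))"

lemma finite_fm_rows: "finite I \<Longrightarrow> finite (fm_rows c I)"
  by (simp add: fm_rows_def)

lemma fm_combine_even [simp]: "fm_combine c g (2 * i) = g i"
  by (simp add: fm_combine_def)

lemma sum_fm_lift:
  fixes c w g :: "nat \<Rightarrow> real"
  assumes "finite I"
  shows "(\<Sum>i\<in>I. fm_lift c I w i * g i) = (\<Sum>r\<in>fm_rows c I. w r * fm_combine c g r)"
proof -
  define P where "P = {p\<in>I. 0 < c p}"
  define N where "N = {q\<in>I. c q < 0}"
  define Z where "Z = {i\<in>I. c i = 0}"
  define e where "e = (\<lambda>(p, q). 2 * prod_encode (p, q) + 1 :: nat)"
  have fin: "finite P" "finite N" "finite Z" using assms by (auto simp: P_def N_def Z_def)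
  have I: "I = Z \<union> (P \<union> N)" and disj: "Z \<inter> (P \<union> N) = {}" "P \<inter> N = {}"
    by (auto simp: P_def N_def Z_def)
  have combine_e: "fm_combine c g (e (p, q)) = - c q * g p + c p * g q" for p q
    by (simp add: e_def fm_combine_def)
  have split: "sum f I = sum f Z + sum f P + sum f N" for f :: "nat \<Rightarrow> real"
    using fin disj by (subst I) (simp add: sum.union_disjoint add.assoc)
  have "(\<Sum>i\<in>I. fm_lift c I w i * g i) =
      (\<Sum>i\<in>Z. w (2 * i) * g i) + (\<Sum>p\<in>P. \<Sum>q\<in>N. w (e (p, q)) * - c q * g p)
        + (\<Sum>q\<in>N. \<Sum>p\<in>P. w (e (p, q)) * c p * g q)"
    unfolding split
    by (intro arg_cong2[where f = "(+)"] sum.cong)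
       (auto simp: fm_lift_def sum_distrib_right e_def P_def N_def Z_def)
  also have "\<dots> = (\<Sum>i\<in>Z. w (2 * i) * g i) + (\<Sum>pq\<in>P \<times> N. w (e pq) * fm_combine c g (e pq))"
  proof -
    have "(\<Sum>p\<in>P. \<Sum>q\<in>N. w (e (p, q)) * - c q * g p) +
        (\<Sum>q\<in>N. \<Sum>p\<in>P. w (e (p, q)) * c p * g q) = (\<Sum>p\<in>P. \<Sum>q\<in>N. w (e (p, q)) * fm_combine c g (e (p, q)))"
      by (simp add: sum.swap[of _ N P] sum.distrib[symmetric] combine_e algebra_simps)
    then show ?thesis by (simp add: sum.cartesian_product case_prod_beta')
  qed
  also have "\<dots> = (\<Sum>r\<in>fm_rows c I. w r * fm_combine c g r)"
  proof -
    have inj: "inj_on (\<lambda>i. 2 * i) Z" "inj_on e (P \<times> N)"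
      by (auto simp: inj_on_def e_def prod_encode_eq)
    have "(\<lambda>i. 2 * i) ` Z \<inter> e ` (P \<times> N) = {}"
      by (auto simp: e_def) presburger
    moreover have "fm_rows c I = (\<lambda>i. 2 * i) ` Z \<union> e ` (P \<times> N)"
      by (simp add: fm_rows_def P_def N_def Z_def e_def)
    ultimately show ?thesis
      using fin inj by (simp add: sum.union_disjoint sum.reindex)
  qed
  finally show ?thesis .
qed

lemma fm_combine_eliminates: "r \<in> fm_rows c I \<Longrightarrow> fm_combine c c r = 0"
  by (auto simp: fm_rows_def fm_combine_def)

lemma fm_lift_nonneg:
  assumes "\<forall>r\<in>fm_rows c I. 0 \<le> w r" "i \<in> I"
  shows "0 \<le> fm_lift c I w i"
proof -
  have row: "0 \<le> w (2 * prod_encode (p, q) + 1)" if "p \<in> I" "0 < c p" "q \<in> I" "c q < 0" for p q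
    using assms(1) that by (force simp: fm_rows_def)
  have "0 \<le> w (2 * i)" if "c i = 0" using assms that by (auto simp: fm_rows_def)
  moreover have "0 \<le> w (2 * prod_encode (i, q) + 1) * - c q" if "0 < c i" "q \<in> I" "c q < 0" for q
    using row[of i q] assms(2) that by (simp add: mult_nonneg_nonpos)
  moreover have "0 \<le> w (2 * prod_encode (p, i) + 1) * c p" if "c i < 0" "p \<in> I" "0 < c p" for p
    using row[of p i] assms(2) that by simp
  ultimately show ?thesis
    by (auto simp: fm_lift_def intro!: sum_nonneg)
qed

lemma fm_solution_between_bounds:
  fixes c s h :: "'a \<Rightarrow> real"
  assumes "c i = 0 \<Longrightarrow> s i \<le> h i"
    and "c i < 0 \<Longrightarrow> (s i - h i) / - c i \<le> t" and "0 < c i \<Longrightarrow> t \<le> (h i - s i) / c i"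
  shows "c i * t + s i \<le> h i"
proof (cases "c i" "0 :: real" rule: linorder_cases)
  case less
  then have "(s i - h i) / - c i \<le> t" using assms(2) by blast
  then have "s i - h i \<le> t * - c i"
    by (subst (asm) pos_divide_le_eq) (use less in auto)
  then show ?thesis by (simp add: algebra_simps)
next
  case greater
  then show ?thesis using assms(3) by (simp add: le_divide_eq algebra_simps)
qed (use assms(1) in simp)

text \<open>A solution of the eliminated system extends to the original one: the eliminated variable
  can be chosen between the lower bounds coming from rows with negative coefficient and the
  upper bounds coming from rows with positive coefficient.\<close>

lemma fm_elimination_feasible:
  fixes M :: "nat \<Rightarrow> 'v \<Rightarrow> real" and h :: "nat \<Rightarrow> real" and k :: 'v
  defines "c \<equiv> \<lambda>i. M i k"
  assumes "finite I" "finite J" "k \<notin> J"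
    and z: "\<forall>r\<in>fm_rows c I. (\<Sum>j\<in>J. fm_combine c (\<lambda>i. M i j) r * z j) \<le> fm_combine c h r"
  shows "\<exists>z. \<forall>i\<in>I. (\<Sum>j\<in>insert k J. M i j * z j) \<le> h i"
proof -
  define s where "s = (\<lambda>i. \<Sum>j\<in>J. M i j * z j)"
  have comb_s: "(\<Sum>j\<in>J. fm_combine c (\<lambda>i. M i j) r * z j) = fm_combine c s r" for r
    by (cases "even r")
       (auto simp: fm_combine_def s_def sum_distrib_left sum_subtractf sum_negf algebra_simps
         split: prod.split)
  have zero: "s i \<le> h i" if "i \<in> I" "c i = 0" for i
    using z[rule_format, of "2 * i"] that by (auto simp: fm_rows_def comb_s s_def)
  have pair: "- c q * s p + c p * s q \<le> - c q * h p + c p * h q"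
    if "p \<in> I" "0 < c p" "q \<in> I" "c q < 0" for p q
  proof -
    have "2 * prod_encode (p, q) + 1 \<in> fm_rows c I" using that by (force simp: fm_rows_def)
    with z have "fm_combine c s (2 * prod_encode (p, q) + 1) \<le> fm_combine c h (2 * prod_encode (p, q) + 1)"
      by (simp only: comb_s)
    then show ?thesis by (simp add: fm_combine_def)
  qed
  have "\<exists>t. (\<forall>q\<in>{q\<in>I. c q < 0}. (s q - h q) / - c q \<le> t) \<and>
      (\<forall>p\<in>{p\<in>I. 0 < c p}. t \<le> (h p - s p) / c p)"
  proof (rule exists_between_finite)
    fix p q assume "p \<in> {p\<in>I. 0 < c p}" "q \<in> {q\<in>I. c q < 0}"
    then show "(s q - h q) / - c q \<le> (h p - s p) / c p"
      using pair[of p q] by (simp add: field_simps)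
  qed (use \<open>finite I\<close> in auto)
  then obtain t where lower: "\<forall>q\<in>{q\<in>I. c q < 0}. (s q - h q) / - c q \<le> t"
    and upper: "\<forall>p\<in>{p\<in>I. 0 < c p}. t \<le> (h p - s p) / c p" by blast
  have "(\<Sum>j\<in>insert k J. M i j * (z(k := t)) j) = c i * t + s i" for i
    using assms(3,4) by (simp add: c_def s_def) (rule sum.cong, auto)
  moreover have "c i * t + s i \<le> h i" if "i \<in> I" for i
    using that zero lower upper by (intro fm_solution_between_bounds) auto
  ultimately have "\<forall>i\<in>I. (\<Sum>j\<in>insert k J. M i j * (z(k := t)) j) \<le> h i"
    by simp
  then show ?thesis by blast
qed

lemma farkas_nat_rows:
  fixes M :: "nat \<Rightarrow> 'v \<Rightarrow> real" and h :: "nat \<Rightarrow> real"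
  assumes "finite J" "finite I" "\<nexists>z. \<forall>i\<in>I. (\<Sum>j\<in>J. M i j * z j) \<le> h i"
  shows "\<exists>w. (\<forall>i\<in>I. 0 \<le> w i) \<and> (\<forall>j\<in>J. (\<Sum>i\<in>I. w i * M i j) = 0) \<and>
    (\<Sum>i\<in>I. w i * h i) < 0"
  using assms
proof (induction J arbitrary: M h I rule: finite_induct)
  case empty
  then obtain i where i: "i \<in> I" "h i < 0" by force
  show ?case
    by (intro exI[of _ "\<lambda>i'. if i' = i then 1 else 0"])
       (use i empty.prems in \<open>auto simp: sum_eq_single[of I i]\<close>)
next
  case (insert k J)
  define c where "c = (\<lambda>i. M i k)"
  have "\<nexists>z. \<forall>r\<in>fm_rows c I.
      (\<Sum>j\<in>J. fm_combine c (\<lambda>i. M i j) r * z j) \<le> fm_combine c h r"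
    using fm_elimination_feasible[OF insert.prems(1) insert.hyps(1,2)] insert.prems(2)
    unfolding c_def by blast
  then obtain w where w: "\<forall>r\<in>fm_rows c I. 0 \<le> w r"
      "\<forall>j\<in>J. (\<Sum>r\<in>fm_rows c I. w r * fm_combine c (\<lambda>i. M i j) r) = 0"
      "(\<Sum>r\<in>fm_rows c I. w r * fm_combine c h r) < 0"
    using insert.IH[where M = "\<lambda>r j. fm_combine c (\<lambda>i. M i j) r" and h = "fm_combine c h"]
      finite_fm_rows[OF insert.prems(1)] by blast
  have lift: "(\<Sum>i\<in>I. fm_lift c I w i * g i) = (\<Sum>r\<in>fm_rows c I. w r * fm_combine c g r)" for g
    using sum_fm_lift[OF insert.prems(1)] .
  show ?case
  proof (intro exI[of _ "fm_lift c I w"] conjI ballI)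
    show "0 \<le> fm_lift c I w i" if "i \<in> I" for i using fm_lift_nonneg[OF w(1) that] .
    show "(\<Sum>i\<in>I. fm_lift c I w i * M i j) = 0" if "j \<in> insert k J" for j
      using that w(2) fm_combine_eliminates lift[of "\<lambda>i. M i j"] by (auto simp: c_def)
    show "(\<Sum>i\<in>I. fm_lift c I w i * h i) < 0" using lift[of h] w(3) by simp
  qed
qed

lemma farkas_inequalities:
  fixes M :: "'i \<Rightarrow> 'v \<Rightarrow> real" and h :: "'i \<Rightarrow> real"
  assumes "finite J" "finite I" "\<nexists>z. \<forall>i\<in>I. (\<Sum>j\<in>J. M i j * z j) \<le> h i"
  shows "\<exists>w. (\<forall>i\<in>I. 0 \<le> w i) \<and> (\<forall>j\<in>J. (\<Sum>i\<in>I. w i * M i j) = 0) \<and>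
    (\<Sum>i\<in>I. w i * h i) < 0"
proof -
  define K where "K = card I"
  obtain e where e: "bij_betw e {..<K} I"
    using ex_bij_betw_nat_finite[OF assms(2)] by (auto simp: atLeast0LessThan K_def)
  then have I: "I = e ` {..<K}" by (simp add: bij_betw_def)
  have "\<nexists>z. \<forall>r\<in>{..<K}. (\<Sum>j\<in>J. M (e r) j * z j) \<le> h (e r)"
    using assms(3) unfolding I by simp
  then obtain w where w: "\<forall>r\<in>{..<K}. 0 \<le> w r"
    "\<forall>j\<in>J. (\<Sum>r<K. w r * M (e r) j) = 0" "(\<Sum>r<K. w r * h (e r)) < 0"
    using farkas_nat_rows[OF assms(1) finite_lessThan, where M = "\<lambda>r. M (e r)" and h = "\<lambda>r. h (e r)"]
    by blast
  define w' where "w' = w \<circ> inv_into {..<K} e"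
  have w'e: "w' (e r) = w r" if "r < K" for r
    using e that by (simp add: w'_def bij_betw_def inv_into_f_f)
  have transfer: "(\<Sum>i\<in>I. w' i * g i) = (\<Sum>r<K. w r * g (e r))" for g
    using sum.reindex_bij_betw[OF e, of "\<lambda>i. w' i * g i"] w'e by simp
  show ?thesis
  proof (intro exI[of _ w'] conjI ballI)
    show "0 \<le> w' i" if "i \<in> I" for i
      using that w(1) w'e unfolding I by auto
    show "(\<Sum>i\<in>I. w' i * M i j) = 0" if "j \<in> J" for j
      using transfer[of "\<lambda>i. M i j"] w(2) that by simp
    show "(\<Sum>i\<in>I. w' i * h i) < 0"
      using transfer[of h] w(3) by simp
  qed
qed

section \<open>Nonnegative representatives of effects\<close>

lemma finite_outs: "finite (outs m na)"
  by (simp add: outs_def finite_PiE)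

lemma finite_ins: "finite (ins m nx)"
  by (simp add: ins_def finite_PiE)

lemma fun_upd_in_outs: "a \<in> outs m na \<Longrightarrow> i < m \<Longrightarrow> b < na i \<Longrightarrow> a(i := b) \<in> outs m na"
  by (auto simp: outs_def PiE_iff extensional_def)

lemma fun_upd_in_ins: "x \<in> ins m nx \<Longrightarrow> i < m \<Longrightarrow> y < nx i \<Longrightarrow> x(i := y) \<in> ins m nx"
  by (auto simp: ins_def PiE_iff extensional_def)

lemma scaled_state:
  fixes q :: state and lam :: real
  assumes nonneg: "\<forall>a\<in>outs m na. \<forall>x\<in>ins m nx. 0 \<le> q a x"
    and total: "\<forall>x\<in>ins m nx. (\<Sum>a\<in>outs m na. q a x) = lam" and "0 < lam"
    and no_signalling: "\<forall>i<m. \<forall>x\<in>ins m nx. \<forall>y<nx i. \<forall>a\<in>outs m na.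
        (\<Sum>b<na i. q (a(i := b)) x) = (\<Sum>b<na i. q (a(i := b)) (x(i := y)))"
  shows "(\<lambda>a x. q a x / lam) \<in> states m nx na"
  using assms by (simp add: states_def is_state_def sum_divide_distrib[symmetric])

text \<open>The linear constraints defining states, as vectors paired with \<open>p\<close> like effects:
  \<open>Inl (i, x, y, a)\<close> is the no-signalling constraint of box \<open>i\<close> between the inputs \<open>x\<close>
  and \<open>x(i := y)\<close> at the outputs \<open>a\<close> off box \<open>i\<close>, \<open>Inr x\<close> the normalisation at the
  input \<open>x\<close>.\<close>

type_synonym constraint = "(nat \<times> tuple \<times> nat \<times> tuple) + tuple"

definition state_constraint ::
    "nat \<Rightarrow> (nat \<Rightarrow> nat) \<Rightarrow> constraint \<Rightarrow> tuple \<Rightarrow> tuple \<Rightarrow> real" where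
  "state_constraint m na v a' x' = (case v of
      Inl (i, x, y, a) \<Rightarrow> ((if x' = x then 1 else 0) - (if x' = x(i := y) then 1 else 0)) *
            (if a' \<in> (\<lambda>b. a(i := b)) ` {..<na i} then 1 else 0)
    | Inr x \<Rightarrow> (if x' = x then 1 else 0))"

definition state_constraints ::
    "nat \<Rightarrow> (nat \<Rightarrow> nat) \<Rightarrow> (nat \<Rightarrow> nat) \<Rightarrow> constraint set" where
  "state_constraints m nx na =
     Inl ` (SIGMA i:{..<m}. SIGMA x:ins m nx. SIGMA y:{..<nx i}. outs m na) \<union> Inr ` ins m nx"

definition is_normalisation :: "constraint \<Rightarrow> real" where
  "is_normalisation v = (case v of Inl _ \<Rightarrow> 0 | Inr _ \<Rightarrow> 1)"

lemma finite_state_constraints: "finite (state_constraints m nx na)"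
  unfolding state_constraints_def using finite_outs finite_ins by (auto intro!: finite_SigmaI)

lemma sum_fun_upd_eq_indicator:
  fixes f :: "tuple \<Rightarrow> real"
  assumes "a \<in> outs m na" "i < m"
  shows "(\<Sum>b<na i. f (a(i := b))) =
    (\<Sum>a'\<in>outs m na. f a' * (if a' \<in> (\<lambda>b. a(i := b)) ` {..<na i} then 1 else 0))"
proof -
  have inj: "inj_on (\<lambda>b. a(i := b)) {..<na i}"
    by (auto simp: inj_on_def) (metis fun_upd_same)
  have "(\<lambda>b. a(i := b)) ` {..<na i} \<subseteq> outs m na"
    using assms fun_upd_in_outs by blast
  then show ?thesis
    using finite_outs by (simp add: sum.reindex[OF inj] if_distrib sum.If_cases Int_absorb1 cong: if_cong)
qed

lemma sum_ins_indicator: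
  fixes p :: state
  assumes "u \<in> ins m nx"
  shows "(\<Sum>a\<in>outs m na. \<Sum>x\<in>ins m nx. p a x * ((if x = u then 1 else 0) * f a)) =
    (\<Sum>a\<in>outs m na. p a u * f a)"
proof (intro sum.cong refl)
  fix a
  have "(\<Sum>x\<in>ins m nx. p a x * ((if x = u then 1 else 0) * f a)) =
      (\<Sum>x\<in>ins m nx. if x = u then p a u * f a else 0)"
    by (rule sum.cong) auto
  then show "(\<Sum>x\<in>ins m nx. p a x * ((if x = u then 1 else 0) * f a)) = p a u * f a"
    using assms finite_ins by simp
qed

lemma pair_state_constraint:
  fixes p :: state
  assumes "v \<in> state_constraints m nx na"
  shows "(\<Sum>a\<in>outs m na. \<Sum>x\<in>ins m nx. p a x * state_constraint m na v a x) =
    (case v of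
       Inl (i, x, y, a) \<Rightarrow> (\<Sum>b<na i. p (a(i := b)) x) - (\<Sum>b<na i. p (a(i := b)) (x(i := y)))
     | Inr x \<Rightarrow> (\<Sum>a\<in>outs m na. p a x))"
proof (cases v)
  case (Inl c)
  then obtain i x y a where v: "v = Inl (i, x, y, a)" and
    i: "i < m" and x: "x \<in> ins m nx" and y: "y < nx i" and a: "a \<in> outs m na"
    using assms by (auto simp: state_constraints_def)
  let ?A = "\<lambda>a'. if a' \<in> (\<lambda>b. a(i := b)) ` {..<na i} then 1 else 0 :: real"
  have "(\<Sum>a'\<in>outs m na. \<Sum>x'\<in>ins m nx. p a' x' * state_constraint m na v a' x') =
      (\<Sum>a'\<in>outs m na. \<Sum>x'\<in>ins m nx. p a' x' * ((if x' = x then 1 else 0) * ?A a')) -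
      (\<Sum>a'\<in>outs m na. \<Sum>x'\<in>ins m nx. p a' x' * ((if x' = x(i := y) then 1 else 0) * ?A a'))"
    by (simp add: v state_constraint_def algebra_simps sum_subtractf)
  also have "\<dots> = (\<Sum>b<na i. p (a(i := b)) x) - (\<Sum>b<na i. p (a(i := b)) (x(i := y)))"
    unfolding sum_ins_indicator[OF x] sum_ins_indicator[OF fun_upd_in_ins[OF x i y]]
    using sum_fun_upd_eq_indicator[OF a i, of "\<lambda>a'. p a' x"]
      sum_fun_upd_eq_indicator[OF a i, of "\<lambda>a'. p a' (x(i := y))"] by simp
  finally show ?thesis by (simp add: v)
next
  case (Inr x)
  then have "x \<in> ins m nx" using assms by (auto simp: state_constraints_def)
  then show ?thesis
    using sum_ins_indicator[where u = x and p = p and na = na and f = "\<lambda>_. 1"]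
    by (simp add: Inr state_constraint_def)
qed

lemma pair_state_constraint_state:
  assumes "p \<in> states m nx na" "v \<in> state_constraints m nx na"
  shows "(\<Sum>a\<in>outs m na. \<Sum>x\<in>ins m nx. p a x * state_constraint m na v a x) = is_normalisation v"
proof (cases v)
  case (Inl c)
  then obtain i x y a where "v = Inl (i, x, y, a)"
    "i < m" "x \<in> ins m nx" "y < nx i" "a \<in> outs m na"
    using assms(2) by (auto simp: state_constraints_def)
  then show ?thesis
    using assms(1) pair_state_constraint[OF assms(2)]
    by (simp add: states_def is_state_def is_normalisation_def)
next
  case (Inr x)
  then show ?thesis
    using assms pair_state_constraint[OF assms(2)]
    by (auto simp: states_def is_state_def is_normalisation_def state_constraints_def)
qed

lemma pair_shifted_by_state_constraints:
  fixes p :: state and R :: "tuple \<Rightarrow> tuple \<Rightarrow> real" and z :: "constraint \<Rightarrow> real"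
  assumes "p \<in> states m nx na"
  shows "(\<Sum>a\<in>outs m na. \<Sum>x\<in>ins m nx. p a x *
      (R a x + (\<Sum>v\<in>state_constraints m nx na. z v * state_constraint m na v a x))) =
    (\<Sum>a\<in>outs m na. \<Sum>x\<in>ins m nx. p a x * R a x) +
    (\<Sum>v\<in>state_constraints m nx na. z v * is_normalisation v)"
proof -
  let ?J = "state_constraints m nx na" and ?C = "state_constraint m na"
  have "(\<Sum>a\<in>outs m na. \<Sum>x\<in>ins m nx. p a x * (R a x + (\<Sum>v\<in>?J. z v * ?C v a x))) =
      (\<Sum>a\<in>outs m na. \<Sum>x\<in>ins m nx. p a x * R a x) +
      (\<Sum>a\<in>outs m na. \<Sum>x\<in>ins m nx. \<Sum>v\<in>?J. p a x * (z v * ?C v a x))"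
    by (simp only: distrib_left sum.distrib sum_distrib_left)
  also have "(\<Sum>a\<in>outs m na. \<Sum>x\<in>ins m nx. \<Sum>v\<in>?J. p a x * (z v * ?C v a x)) =
      (\<Sum>v\<in>?J. z v * (\<Sum>a\<in>outs m na. \<Sum>x\<in>ins m nx. p a x * ?C v a x))"
    by (simp only: sum.swap[where B = ?J] sum_distrib_left mult.left_commute)
  also have "\<dots> = (\<Sum>v\<in>?J. z v * is_normalisation v)"
    using assms by (simp add: pair_state_constraint_state)
  finally show ?thesis .
qed

lemma negative_state_of_dual_certificate:
  fixes q :: state and R :: "tuple \<Rightarrow> tuple \<Rightarrow> real"
  assumes q_nonneg: "\<forall>a\<in>outs m na. \<forall>x\<in>ins m nx. 0 \<le> q a x"
    and q_negative: "(\<Sum>a\<in>outs m na. \<Sum>x\<in>ins m nx. q a x * R a x) < 0"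
    and q_constraint: "\<And>v. v \<in> state_constraints m nx na \<Longrightarrow>
      (\<Sum>a\<in>outs m na. \<Sum>x\<in>ins m nx. q a x * state_constraint m na v a x) = lam * is_normalisation v"
  shows "\<exists>p\<in>states m nx na. (\<Sum>a\<in>outs m na. \<Sum>x\<in>ins m nx. p a x * R a x) < 0"
proof -
  have q_total: "\<forall>x\<in>ins m nx. (\<Sum>a\<in>outs m na. q a x) = lam"
  proof
    fix x assume "x \<in> ins m nx"
    then have "Inr x \<in> state_constraints m nx na" by (simp add: state_constraints_def)
    from q_constraint[OF this] pair_state_constraint[OF this, of q]
    show "(\<Sum>a\<in>outs m na. q a x) = lam" by (simp add: is_normalisation_def)
  qed
  show ?thesis
  proof (cases "0 < lam")
    case True
    have "\<forall>i<m. \<forall>x\<in>ins m nx. \<forall>y<nx i. \<forall>a\<in>outs m na.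
        (\<Sum>b<na i. q (a(i := b)) x) = (\<Sum>b<na i. q (a(i := b)) (x(i := y)))"
    proof (intro allI impI ballI)
      fix i x y a assume "i < m" "x \<in> ins m nx" "y < nx i" "a \<in> outs m na"
      then have "Inl (i, x, y, a) \<in> state_constraints m nx na" by (simp add: state_constraints_def)
      from q_constraint[OF this] pair_state_constraint[OF this, of q]
      show "(\<Sum>b<na i. q (a(i := b)) x) = (\<Sum>b<na i. q (a(i := b)) (x(i := y)))"
        by (simp add: is_normalisation_def)
    qed
    then have "(\<lambda>a x. q a x / lam) \<in> states m nx na"
      using scaled_state q_nonneg q_total True by blast
    moreover have "(\<Sum>a\<in>outs m na. \<Sum>x\<in>ins m nx. q a x / lam * R a x) < 0"
      using q_negative True by (simp add: sum_divide_distrib[symmetric] divide_neg_pos)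
    ultimately show ?thesis by (intro bexI[of _ "\<lambda>a x. q a x / lam"]) simp_all
  next
    case False
    have "q a x = 0" if "a \<in> outs m na" "x \<in> ins m nx" for a x
    proof -
      have "(\<Sum>a\<in>outs m na. q a x) = 0"
        using q_total q_nonneg that False by (metis antisym not_less sum_nonneg)
      then show ?thesis
        using sum_nonneg_eq_0_iff[OF finite_outs, where f = "\<lambda>a. q a x"] q_nonneg that by blast
    qed
    then show ?thesis using q_negative by simp
  qed
qed

text \<open>The dual of the linear program asking for a nonnegative representative of \<open>R\<close>: by Farkas'
  lemma, its infeasibility is witnessed by a nonnegative no-signalling vector, which after
  normalisation is a state on which \<open>R\<close> is negative.\<close>

lemma negative_state_if_no_nonneg_shift:
  fixes m :: nat and nx na :: "nat \<Rightarrow> nat" and R :: "tuple \<Rightarrow> tuple \<Rightarrow> real"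
  defines "J \<equiv> state_constraints m nx na" and "C \<equiv> state_constraint m na"
  assumes "\<nexists>z. (\<forall>a\<in>outs m na. \<forall>x\<in>ins m nx. 0 \<le> R a x + (\<Sum>v\<in>J. z v * C v a x)) \<and>
      (\<Sum>v\<in>J. z v * is_normalisation v) = 0"
  shows "\<exists>p\<in>states m nx na. (\<Sum>a\<in>outs m na. \<Sum>x\<in>ins m nx. p a x * R a x) < 0"
proof -
  define I :: "((tuple \<times> tuple) + bool) set" where "I = Inl ` (outs m na \<times> ins m nx) \<union> range Inr"
  have Inr_I: "Inr b \<in> I" for b by (simp add: I_def)
  define M :: "(tuple \<times> tuple) + bool \<Rightarrow> constraint \<Rightarrow> real"
    where "M = (\<lambda>row v. case row of
      Inl (a, x) \<Rightarrow> - C v a x | Inr b \<Rightarrow> (if b then 1 else -1) * is_normalisation v)"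
  define h :: "(tuple \<times> tuple) + bool \<Rightarrow> real"
    where "h = (\<lambda>row. case row of Inl (a, x) \<Rightarrow> R a x | Inr _ \<Rightarrow> 0)"
  have sum_I: "(\<Sum>row\<in>I. f row) =
      (\<Sum>a\<in>outs m na. \<Sum>x\<in>ins m nx. f (Inl (a, x))) + f (Inr True) + f (Inr False)"
    for f :: "_ \<Rightarrow> real"
  proof -
    have "I = insert (Inr True) (insert (Inr False) (Inl ` (outs m na \<times> ins m nx)))"
      by (auto simp: I_def UNIV_bool)
    then show ?thesis
      using finite_outs finite_ins
      by (simp add: finite_cartesian_product sum.reindex sum.cartesian_product image_iff add_ac)
  qed
  have "\<nexists>z. \<forall>row\<in>I. (\<Sum>v\<in>J. M row v * z v) \<le> h row"
  proof
    assume "\<exists>z. \<forall>row\<in>I. (\<Sum>v\<in>J. M row v * z v) \<le> h row"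
    then obtain z where z: "\<forall>row\<in>I. (\<Sum>v\<in>J. M row v * z v) \<le> h row" ..
    have "0 \<le> R a x + (\<Sum>v\<in>J. z v * C v a x)" if "a \<in> outs m na" "x \<in> ins m nx" for a x
      using z[rule_format, of "Inl (a, x)"] that by (simp add: I_def M_def h_def sum_negf mult.commute)
    moreover have "(\<Sum>v\<in>J. z v * is_normalisation v) = 0"
      using z[rule_format, OF Inr_I[of True]] z[rule_format, OF Inr_I[of False]]
      by (simp add: M_def h_def sum_negf mult.commute)
    ultimately show False using assms(3) by blast
  qed
  then obtain w where w: "\<forall>row\<in>I. 0 \<le> w row" "\<forall>v\<in>J. (\<Sum>row\<in>I. w row * M row v) = 0"
    "(\<Sum>row\<in>I. w row * h row) < 0"
    using farkas_inequalities[of J I M h] finite_state_constraints finite_outs finite_ins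
    by (auto simp: J_def I_def)
  define q where "q = (\<lambda>a x. w (Inl (a, x)))"
  define lam where "lam = w (Inr True) - w (Inr False)"
  have q_nonneg: "\<forall>a\<in>outs m na. \<forall>x\<in>ins m nx. 0 \<le> q a x"
    using w(1) by (simp add: q_def I_def)
  have q_negative: "(\<Sum>a\<in>outs m na. \<Sum>x\<in>ins m nx. q a x * R a x) < 0"
    using w(3) by (simp add: sum_I h_def q_def)
  have q_constraint: "(\<Sum>a\<in>outs m na. \<Sum>x\<in>ins m nx. q a x * C v a x) = lam * is_normalisation v"
    if "v \<in> J" for v
    using w(2) that by (simp add: sum_I M_def q_def lam_def sum_negf algebra_simps)
  show ?thesis
    using negative_state_of_dual_certificate[OF q_nonneg q_negative] q_constraint
    unfolding J_def C_def by blast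
qed

lemma effect_nonneg_representation:
  assumes "is_effect m nx na e"
  shows "\<exists>R. (\<forall>a\<in>outs m na. \<forall>x\<in>ins m nx. 0 \<le> R a x) \<and>
    (\<forall>p\<in>states m nx na. e p = (\<Sum>a\<in>outs m na. \<Sum>x\<in>ins m nx. p a x * R a x))"
proof -
  obtain R where R: "\<forall>p\<in>states m nx na. e p = (\<Sum>a\<in>outs m na. \<Sum>x\<in>ins m nx. p a x * R a x)"
    and e_nonneg: "\<forall>p\<in>states m nx na. 0 \<le> e p"
    using assms unfolding is_effect_def by blast
  have "0 \<le> (\<Sum>a\<in>outs m na. \<Sum>x\<in>ins m nx. p a x * R a x)" if "p \<in> states m nx na" for p
    using R e_nonneg that by auto
  then obtain z where z: "\<forall>a\<in>outs m na. \<forall>x\<in>ins m nx.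
      0 \<le> R a x + (\<Sum>v\<in>state_constraints m nx na. z v * state_constraint m na v a x)"
    and z_norm: "(\<Sum>v\<in>state_constraints m nx na. z v * is_normalisation v) = 0"
    using negative_state_if_no_nonneg_shift[where R = R] by (meson not_le)
  define R' where
    "R' = (\<lambda>a x. R a x + (\<Sum>v\<in>state_constraints m nx na. z v * state_constraint m na v a x))"
  have "e p = (\<Sum>a\<in>outs m na. \<Sum>x\<in>ins m nx. p a x * R' a x)" if "p \<in> states m nx na" for p
    unfolding R'_def pair_shifted_by_state_constraints[OF that] z_norm using R that by simp
  moreover have "\<forall>a\<in>outs m na. \<forall>x\<in>ins m nx. 0 \<le> R' a x"
    using z by (simp add: R'_def)
  ultimately show ?thesis by blast
qed

section \<open>Deterministic local states\<close>

declare One_nat_def[simp del] add_2_eq_Suc'[simp del] add_2_eq_Suc[simp del]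

definition local_response :: "nat \<Rightarrow> (nat \<Rightarrow> nat \<Rightarrow> nat) \<Rightarrow> tuple \<Rightarrow> tuple" where
  "local_response m g x = restrict (\<lambda>i. g i (x i)) {..<m}"

definition local_det_state :: "nat \<Rightarrow> (nat \<Rightarrow> nat \<Rightarrow> nat) \<Rightarrow> state" where
  "local_det_state m g = (\<lambda>a x. if a = local_response m g x then 1 else 0)"

definition is_response ::
    "nat \<Rightarrow> (nat \<Rightarrow> nat) \<Rightarrow> (nat \<Rightarrow> nat) \<Rightarrow> (nat \<Rightarrow> nat \<Rightarrow> nat) \<Rightarrow> bool" where
  "is_response m nx na g \<longleftrightarrow> (\<forall>i<m. \<forall>y<nx i. g i y < na i)"

lemma local_response_in_outs:
  "is_response m nx na g \<Longrightarrow> x \<in> ins m nx \<Longrightarrow> local_response m g x \<in> outs m na"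
  by (auto simp: is_response_def local_response_def outs_def ins_def PiE_iff)

lemma sum_fun_upd_indicator:
  assumes "c \<in> outs m na" "i < m"
  shows "(\<Sum>b<na i. if a(i := b) = c then 1 else 0 :: real) =
    (if \<forall>j. j \<noteq> i \<longrightarrow> a j = c j then 1 else 0)"
proof (cases "\<forall>j. j \<noteq> i \<longrightarrow> a j = c j")
  case True
  then have "(a(i := b) = c) \<longleftrightarrow> b = c i" for b
    by (auto simp: fun_eq_iff)
  moreover have "c i < na i" using assms by (auto simp: outs_def PiE_iff)
  ultimately show ?thesis using True by simp
next
  case False
  then have "a(i := b) \<noteq> c" for b by (metis fun_upd_other)
  then show ?thesis using False by simp
qed

lemma local_det_state_in_states:
  assumes g: "is_response m nx na g"
  shows "local_det_state m g \<in> states m nx na"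
  unfolding states_def is_state_def mem_Collect_eq
proof (intro conjI ballI allI impI)
  fix x assume "x \<in> ins m nx"
  then show "(\<Sum>a\<in>outs m na. local_det_state m g a x) = 1"
    using local_response_in_outs[OF g] finite_outs by (simp add: local_det_state_def)
next
  fix i x y a assume i: "i < m" and x: "x \<in> ins m nx" and "y < nx i"
  then have "local_response m g (x(i := y)) \<in> outs m na"
    using local_response_in_outs[OF g] fun_upd_in_ins by blast
  moreover have "(\<forall>j. j \<noteq> i \<longrightarrow> a j = local_response m g x j) \<longleftrightarrow>
      (\<forall>j. j \<noteq> i \<longrightarrow> a j = local_response m g (x(i := y)) j)"
    by (auto simp: local_response_def)
  ultimately show "(\<Sum>b<na i. local_det_state m g (a(i := b)) x) =
      (\<Sum>b<na i. local_det_state m g (a(i := b)) (x(i := y)))"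
    unfolding local_det_state_def
    using sum_fun_upd_indicator[OF local_response_in_outs[OF g x] i]
      sum_fun_upd_indicator[of "local_response m g (x(i := y))" m na i a] i
    by simp
qed (simp add: local_det_state_def)

lemma pair_local_det_state:
  fixes T :: "tuple \<Rightarrow> tuple \<Rightarrow> real"
  assumes "is_response m nx na g"
  shows "(\<Sum>a\<in>outs m na. \<Sum>x\<in>ins m nx. local_det_state m g a x * T a x) =
    (\<Sum>x\<in>ins m nx. T (local_response m g x) x)"
proof -
  have "(\<Sum>a\<in>outs m na. local_det_state m g a x * T a x) = T (local_response m g x) x"
    if "x \<in> ins m nx" for x
    by (rule trans[OF sum_eq_single[OF finite_outs local_response_in_outs[OF assms that]]])
       (auto simp: local_det_state_def)
  then show ?thesis
    by (simp add: sum.swap[of _ "ins m nx" "outs m na"])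
qed

section \<open>Systems whose boxes other than the first two are classical\<close>

lemma sum_lessThan_eq_single:
  fixes f :: "nat \<Rightarrow> real"
  assumes "u < N" "\<And>u'. u' < N \<Longrightarrow> u' \<noteq> u \<Longrightarrow> f u' = 0"
  shows "(\<Sum>u'<N. f u') = f u"
  using sum_eq_single[of "{..<N}" u f] assms by simp

lemma fun_upd_0_1_same [simp]: "a(0 := \<alpha>, 1 := a 1) = (a(0 := \<alpha>) :: nat \<Rightarrow> nat)"
  by (auto simp: fun_eq_iff)

locale two_general_boxes =
  fixes n :: nat and nx na :: "nat \<Rightarrow> nat"
  assumes pos: "\<forall>i < n + 2. 0 < nx i \<and> 0 < na i"
    and classical: "\<forall>i. 2 \<le> i \<and> i < n + 2 \<longrightarrow> nx i = 1"
begin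

abbreviation "m \<equiv> n + 2"
abbreviation "OUTS \<equiv> outs m na"
abbreviation "INS \<equiv> ins m nx"

lemma nx_pos: "0 < nx 0" "0 < nx 1" and na_pos: "0 < na 0" "0 < na 1"
  using pos by auto

definition input_pair :: "nat \<Rightarrow> nat \<Rightarrow> tuple" where
  "input_pair u v = (restrict (\<lambda>i. 0) {..<m})(0 := u, 1 := v)"

lemma input_pair_in_ins: "u < nx 0 \<Longrightarrow> v < nx 1 \<Longrightarrow> input_pair u v \<in> INS"
  using pos by (auto simp: input_pair_def ins_def PiE_iff extensional_def)

lemma input_pair_simps [simp]: "input_pair u v 0 = u" "input_pair u v 1 = v"
  by (auto simp: input_pair_def)

lemma input_pair_inject [simp]: "input_pair u v = input_pair u' v' \<longleftrightarrow> u = u' \<and> v = v'"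
  by (metis input_pair_simps)

lemma ins_lt0: "x \<in> INS \<Longrightarrow> x 0 < nx 0" and ins_lt1: "x \<in> INS \<Longrightarrow> x 1 < nx 1"
  by (auto simp: ins_def PiE_iff)

lemma ins_eq_input_pair:
  assumes "x \<in> INS"
  shows "x = input_pair (x 0) (x 1)"
proof
  fix i
  show "x i = input_pair (x 0) (x 1) i"
  proof (cases "i < m")
    case True
    then have "x i < nx i" using assms by (auto simp: ins_def PiE_iff)
    then show ?thesis using classical True by (cases "i = 0 \<or> i = 1") (auto simp: input_pair_def)
  next
    case False
    then show ?thesis using assms by (auto simp: ins_def PiE_iff input_pair_def extensional_def)
  qed
qed

lemma sum_ins: "(\<Sum>x\<in>INS. f x) = (\<Sum>u<nx 0. \<Sum>v<nx 1. f (input_pair u v))"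
proof -
  have "INS = (\<lambda>(u, v). input_pair u v) ` ({..<nx 0} \<times> {..<nx 1})"
  proof
    show "INS \<subseteq> (\<lambda>(u, v). input_pair u v) ` ({..<nx 0} \<times> {..<nx 1})"
    proof
      fix x assume x: "x \<in> INS"
      show "x \<in> (\<lambda>(u, v). input_pair u v) ` ({..<nx 0} \<times> {..<nx 1})"
        using ins_eq_input_pair[OF x] ins_lt0[OF x] ins_lt1[OF x]
        by (auto intro!: image_eqI[of _ _ "(x 0, x 1)"])
    qed
  qed (auto intro: input_pair_in_ins)
  moreover have "inj_on (\<lambda>(u, v). input_pair u v) ({..<nx 0} \<times> {..<nx 1})"
    by (auto simp: inj_on_def)
  ultimately show ?thesis
    by (simp add: sum.reindex sum.cartesian_product case_prod_unfold)
qed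

lemma outs_upd0: "a \<in> OUTS \<Longrightarrow> b < na 0 \<Longrightarrow> a(0 := b) \<in> OUTS"
  and outs_upd1: "a \<in> OUTS \<Longrightarrow> b < na 1 \<Longrightarrow> a(1 := b) \<in> OUTS"
  by (auto intro: fun_upd_in_outs)

lemma outs_lt: "a \<in> OUTS \<Longrightarrow> i < m \<Longrightarrow> a i < na i"
  and outs_undefined: "a \<in> OUTS \<Longrightarrow> \<not> i < m \<Longrightarrow> a i = undefined"
  by (auto simp: outs_def PiE_iff extensional_def)

end

text \<open>In the application, \<open>T\<close> is the sum of nonnegative representatives of the effects of a
  measurement.\<close>

locale unit_effect = two_general_boxes +
  fixes T :: "tuple \<Rightarrow> tuple \<Rightarrow> real"
  assumes T_nonneg: "\<forall>a\<in>outs (n + 2) na. \<forall>x\<in>ins (n + 2) nx. 0 \<le> T a x"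
    and T_unit: "\<forall>p\<in>states (n + 2) nx na.
      (\<Sum>a\<in>outs (n + 2) na. \<Sum>x\<in>ins (n + 2) nx. p a x * T a x) = 1"
begin

text \<open>Pair \<open>T\<close> with the deterministic local states whose classical boxes answer as in \<open>a\<close>.\<close>

lemma sum_local_response:
  assumes a: "a \<in> OUTS" and A: "\<And>u. A u < na 0" and B: "\<And>v. B v < na 1"
  shows "(\<Sum>u<nx 0. \<Sum>v<nx 1. T (a(0 := A u, 1 := B v)) (input_pair u v)) = 1"
proof -
  define g where "g = (\<lambda>i y. if i = 0 then A y else if i = 1 then B y else a i)"
  have g: "is_response m nx na g" using A B a by (auto simp: is_response_def g_def intro: outs_lt)
  have "local_response m g (input_pair u v) = a(0 := A u, 1 := B v)" for u v
    using outs_undefined[OF a] by (auto simp: local_response_def g_def input_pair_def)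
  then show ?thesis
    using T_unit local_det_state_in_states[OF g] pair_local_det_state[OF g, of T] by (simp add: sum_ins)
qed

lemma unit_sum: "a \<in> OUTS \<Longrightarrow> (\<Sum>u<nx 0. \<Sum>v<nx 1. T a (input_pair u v)) = 1"
  using sum_local_response[of a "\<lambda>_. a 0" "\<lambda>_. a 1"] outs_lt[of a 0] outs_lt[of a 1] by simp

text \<open>Changing the response of box 0 at the input \<open>u\<close> only changes the \<open>u\<close>-row of the sum
  in \<open>sum_local_response\<close>, which therefore keeps its value.\<close>

lemma sum_inputs1_upd0:
  assumes a: "a \<in> OUTS" and "\<alpha> < na 0" and u: "u < nx 0"
  shows "(\<Sum>v<nx 1. T (a(0 := \<alpha>)) (input_pair u v)) = (\<Sum>v<nx 1. T a (input_pair u v))"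
proof -
  define A where "A = (\<lambda>_. a 0)(u := \<alpha>)"
  have "(\<Sum>u'<nx 0. (\<Sum>v<nx 1. T (a(0 := A u')) (input_pair u' v)) - (\<Sum>v<nx 1. T a (input_pair u' v))) = 0"
    using sum_local_response[OF a, of A "\<lambda>_. a 1"] unit_sum[OF a] assms outs_lt[OF a]
    by (simp add: A_def sum_subtractf)
  moreover have "(\<Sum>u'<nx 0. (\<Sum>v<nx 1. T (a(0 := A u')) (input_pair u' v)) - (\<Sum>v<nx 1. T a (input_pair u' v)))
      = (\<Sum>v<nx 1. T (a(0 := \<alpha>)) (input_pair u v)) - (\<Sum>v<nx 1. T a (input_pair u v))"
    by (rule trans[OF sum_lessThan_eq_single[OF u]]) (auto simp: A_def)
  ultimately show ?thesis by simp
qed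

lemma sum_inputs0_upd1:
  assumes a: "a \<in> OUTS" and "\<beta> < na 1" and v: "v < nx 1"
  shows "(\<Sum>u<nx 0. T (a(1 := \<beta>)) (input_pair u v)) = (\<Sum>u<nx 0. T a (input_pair u v))"
proof -
  define B where "B = (\<lambda>_. a 1)(v := \<beta>)"
  have "(\<Sum>v'<nx 1. (\<Sum>u<nx 0. T (a(1 := B v')) (input_pair u v')) - (\<Sum>u<nx 0. T a (input_pair u v'))) = 0"
    using sum_local_response[OF a, of "\<lambda>_. a 0" B] unit_sum[OF a] assms outs_lt[OF a]
      sum.swap[of "\<lambda>u v. T (a(1 := B v)) (input_pair u v)" "{..<nx 1}" "{..<nx 0}"]
      sum.swap[of "\<lambda>u v. T a (input_pair u v)" "{..<nx 1}" "{..<nx 0}"]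
    by (simp add: B_def sum_subtractf)
  moreover have "(\<Sum>v'<nx 1. (\<Sum>u<nx 0. T (a(1 := B v')) (input_pair u v')) - (\<Sum>u<nx 0. T a (input_pair u v')))
      = (\<Sum>u<nx 0. T (a(1 := \<beta>)) (input_pair u v)) - (\<Sum>u<nx 0. T a (input_pair u v))"
    by (rule trans[OF sum_lessThan_eq_single[OF v]]) (auto simp: B_def)
  ultimately show ?thesis by simp
qed

text \<open>Inclusion--exclusion over the four responses of boxes 0 and 1 that differ from \<open>a\<close> at most
  at the inputs \<open>u\<close> and \<open>v\<close> leaves a single mixed second difference, which must vanish.\<close>

lemma upd0_upd1_difference:
  assumes a: "a \<in> OUTS" and "\<alpha> < na 0" "\<beta> < na 1" and u: "u < nx 0" and v: "v < nx 1"
  shows "T a (input_pair u v) - T (a(0 := \<alpha>)) (input_pair u v) =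
    T (a(1 := \<beta>)) (input_pair u v) - T (a(0 := \<alpha>, 1 := \<beta>)) (input_pair u v)"
proof -
  define A where "A = (\<lambda>_::nat. a 0)(u := \<alpha>)"
  define B where "B = (\<lambda>_::nat. a 1)(v := \<beta>)"
  define G where "G = (\<lambda>A B u' v'. T (a(0 := A u', 1 := B v')) (input_pair u' v'))"
  have one: "(\<Sum>u'<nx 0. \<Sum>v'<nx 1. G A' B' u' v') = 1"
    if "A' \<in> {\<lambda>_. a 0, A}" "B' \<in> {\<lambda>_. a 1, B}" for A' B'
    unfolding G_def using that assms outs_lt[OF a]
    by (intro sum_local_response[OF a]) (auto simp: A_def B_def)
  define D where "D = (\<lambda>u' v'. G (\<lambda>_. a 0) (\<lambda>_. a 1) u' v' - G A (\<lambda>_. a 1) u' v'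
    - G (\<lambda>_. a 0) B u' v' + G A B u' v')"
  have "(\<Sum>u'<nx 0. \<Sum>v'<nx 1. D u' v') = 0"
    using one by (simp add: D_def sum.distrib sum_subtractf)
  moreover have "(\<Sum>u'<nx 0. \<Sum>v'<nx 1. D u' v') = D u v"
  proof (rule trans[OF sum_lessThan_eq_single[OF u]])
    show "(\<Sum>v'<nx 1. D u' v') = 0" if "u' \<noteq> u" for u'
      using that by (simp add: D_def A_def G_def)
    show "(\<Sum>v'<nx 1. D u v') = D u v"
      by (rule sum_lessThan_eq_single[OF v]) (simp add: D_def B_def G_def)
  qed
  ultimately show ?thesis by (simp add: D_def G_def A_def B_def)
qed

text \<open>The decomposition \<open>T a (u, v) = weight0 a u v + weight1 a u v\<close> into nonnegative parts,
  \<open>weight0\<close> independent of the output of box 1 and \<open>weight1\<close> independent of that of box 0: they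
  are the contributions of measuring box 0 (with input \<open>u\<close>) first and of measuring box 1
  (with input \<open>v\<close>) first. Nonnegativity comes from taking the minimum over the output of box 1.\<close>

definition min_weight :: "tuple \<Rightarrow> nat \<Rightarrow> nat \<Rightarrow> real" where
  "min_weight a u v = Min ((\<lambda>b. T (a(0 := 0, 1 := b)) (input_pair u v)) ` {..<na 1})"

definition weight1 :: "tuple \<Rightarrow> nat \<Rightarrow> nat \<Rightarrow> real" where
  "weight1 a u v = T (a(0 := 0)) (input_pair u v) - min_weight a u v"

definition weight0 :: "tuple \<Rightarrow> nat \<Rightarrow> nat \<Rightarrow> real" where
  "weight0 a u v = T a (input_pair u v) - weight1 a u v"

definition prob0 :: "tuple \<Rightarrow> nat \<Rightarrow> real" where
  "prob0 a u = (\<Sum>v<nx 1. weight0 a u v)"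

definition prob1 :: "tuple \<Rightarrow> nat \<Rightarrow> real" where
  "prob1 a v = (\<Sum>u<nx 0. weight1 a u v)"

lemma T_eq_weights: "T a (input_pair u v) = weight0 a u v + weight1 a u v"
  by (simp add: weight0_def)

lemma min_weight_le: "b < na 1 \<Longrightarrow> min_weight a u v \<le> T (a(0 := 0, 1 := b)) (input_pair u v)"
  unfolding min_weight_def by (rule Min_le) auto

lemma min_weight_attained: "\<exists>b<na 1. min_weight a u v = T (a(0 := 0, 1 := b)) (input_pair u v)"
proof -
  have "min_weight a u v \<in> (\<lambda>b. T (a(0 := 0, 1 := b)) (input_pair u v)) ` {..<na 1}"
    unfolding min_weight_def using na_pos by (intro Min_in) auto
  then show ?thesis by auto
qed

lemma min_weight_upd1 [simp]: "min_weight (a(1 := \<beta>)) u v = min_weight a u v"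
  by (simp add: min_weight_def fun_upd_twist[of 1 0])

lemma weight1_upd0 [simp]: "weight1 (a(0 := \<alpha>)) u v = weight1 a u v"
  by (simp add: weight1_def min_weight_def)

lemma weight1_nonneg: "a \<in> OUTS \<Longrightarrow> 0 \<le> weight1 a u v"
  using min_weight_le[of "a 1" a u v] outs_lt[of a 1] by (simp add: weight1_def)

lemma weight0_upd1:
  assumes "a \<in> OUTS" "\<beta> < na 1" "u < nx 0" "v < nx 1"
  shows "weight0 (a(1 := \<beta>)) u v = weight0 a u v"
  using upd0_upd1_difference[OF assms(1) na_pos(1) assms(2-4)]
  by (simp add: weight0_def weight1_def fun_upd_twist[of 1 0])

lemma weight0_nonneg:
  assumes a: "a \<in> OUTS" and u: "u < nx 0" and v: "v < nx 1"
  shows "0 \<le> weight0 a u v"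
proof -
  obtain b where b: "b < na 1" "min_weight a u v = T (a(0 := 0, 1 := b)) (input_pair u v)"
    using min_weight_attained by blast
  then have "weight0 a u v = T (a(1 := b)) (input_pair u v)"
    using upd0_upd1_difference[OF a na_pos(1) b(1) u v] by (simp add: weight0_def weight1_def)
  then show ?thesis
    using T_nonneg outs_upd1[OF a b(1)] input_pair_in_ins[OF u v] by simp
qed

lemma prob0_upd0:
  assumes a: "a \<in> OUTS" and "\<alpha> < na 0" "u < nx 0"
  shows "prob0 (a(0 := \<alpha>)) u = prob0 a u"
  using sum_inputs1_upd0[OF assms] by (simp add: prob0_def weight0_def sum_subtractf)

lemma prob0_upd1: "a \<in> OUTS \<Longrightarrow> \<beta> < na 1 \<Longrightarrow> u < nx 0 \<Longrightarrow> prob0 (a(1 := \<beta>)) u = prob0 a u"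
  unfolding prob0_def by (rule sum.cong) (auto simp: weight0_upd1)

lemma prob1_upd0 [simp]: "prob1 (a(0 := \<alpha>)) v = prob1 a v"
  by (simp add: prob1_def)

lemma prob1_upd1:
  assumes a: "a \<in> OUTS" and "\<beta> < na 1" "v < nx 1"
  shows "prob1 (a(1 := \<beta>)) v = prob1 a v"
  using sum_inputs0_upd1[OF outs_upd0[OF a na_pos(1)] assms(2,3)]
  by (simp add: prob1_def weight1_def sum_subtractf fun_upd_twist[of 1 0])

lemma prob0_prob1_sum:
  assumes "a \<in> OUTS"
  shows "(\<Sum>u<nx 0. prob0 a u) + (\<Sum>v<nx 1. prob1 a v) = 1"
proof -
  have "(\<Sum>v<nx 1. prob1 a v) = (\<Sum>u<nx 0. \<Sum>v<nx 1. weight1 a u v)"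
    unfolding prob1_def by (rule sum.swap)
  then show ?thesis
    using unit_sum[OF assms] by (simp add: prob0_def T_eq_weights sum.distrib)
qed

lemma prob0_nonneg: "a \<in> OUTS \<Longrightarrow> u < nx 0 \<Longrightarrow> 0 \<le> prob0 a u"
  unfolding prob0_def by (intro sum_nonneg) (auto intro: weight0_nonneg)

lemma prob1_nonneg: "a \<in> OUTS \<Longrightarrow> 0 \<le> prob1 a v"
  unfolding prob1_def by (intro sum_nonneg) (auto intro: weight1_nonneg)

lemma weight0_eq_0:
  assumes a: "a \<in> OUTS" and u: "u < nx 0" and v: "v < nx 1" and "prob0 a u = 0"
  shows "weight0 a u v = 0"
  using assms sum_nonneg_eq_0_iff[of "{..<nx 1}" "weight0 a u"] weight0_nonneg[OF a u]
  by (simp add: prob0_def)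

lemma weight1_eq_0:
  assumes a: "a \<in> OUTS" and u: "u < nx 0" and "prob1 a v = 0"
  shows "weight1 a u v = 0"
  using assms sum_nonneg_eq_0_iff[of "{..<nx 0}" "\<lambda>u'. weight1 a u' v"] weight1_nonneg[OF a]
  by (simp add: prob1_def)

text \<open>The first choice of a strategy may only depend on the outputs of the classical boxes.\<close>

definition classical_part :: "tuple \<Rightarrow> tuple" where
  "classical_part a = a(0 := 0, 1 := 0)"

lemma classical_part_in_outs: "a \<in> OUTS \<Longrightarrow> classical_part a \<in> OUTS"
  unfolding classical_part_def using outs_upd0 outs_upd1 na_pos by blast

lemma prob0_classical_part: "a \<in> OUTS \<Longrightarrow> u < nx 0 \<Longrightarrow> prob0 (classical_part a) u = prob0 a u"
  unfolding classical_part_def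
  using prob0_upd1[OF outs_upd0 na_pos(2)] prob0_upd0 na_pos by simp

lemma prob1_classical_part: "a \<in> OUTS \<Longrightarrow> v < nx 1 \<Longrightarrow> prob1 (classical_part a) v = prob1 a v"
  unfolding classical_part_def using prob1_upd1[OF outs_upd0 na_pos(2)] na_pos by simp

lemma weight0_classical_part:
  "a \<in> OUTS \<Longrightarrow> u < nx 0 \<Longrightarrow> v < nx 1 \<Longrightarrow>
    weight0 ((classical_part a)(0 := a 0)) u v = weight0 a u v"
  using weight0_upd1[OF _ na_pos(2)] by (simp add: classical_part_def fun_upd_twist[of 1 0])

lemma weight1_classical_part: "weight1 ((classical_part a)(1 := a 1)) u v = weight1 a u v"
  by (simp add: classical_part_def)

end

section \<open>Two-stage strategies\<close>

definition output_at :: "(nat \<times> nat \<times> nat) list \<Rightarrow> nat \<Rightarrow> nat" where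
  "output_at h i = snd (snd (hd (filter (\<lambda>e. fst e = i) h)))"

abbreviation classical_prefix :: "tuple \<Rightarrow> nat \<Rightarrow> (nat \<times> nat \<times> nat) list" where
  "classical_prefix a k \<equiv> map (\<lambda>j. (j + 2, 0, a (j + 2))) [0..<k]"

lemma filter_classical_prefix:
  "filter (\<lambda>e. fst e = i) (classical_prefix a k) =
   (if 2 \<le> i \<and> i < k + 2 then [(i, 0, a i)] else [])"
  by (induction k) (auto simp: add_2_eq_Suc')

text \<open>A two-stage strategy measures the classical boxes \<open>2, \<dots>, n + 1\<close> first. Writing \<open>c\<close> for
  the classical part of the outputs, it then measures the general box \<open>fst (F1 c)\<close> with the input
  \<open>snd (F1 c)\<close> and, having seen its output \<open>o\<close>, the other general box with the input
  \<open>F2 (c, F1 c, o)\<close>.\<close>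

type_synonym first_rule = "tuple \<Rightarrow> nat \<times> nat"
type_synonym second_rule = "tuple \<times> (nat \<times> nat) \<times> nat \<Rightarrow> nat"
type_synonym 'r choice = "first_rule \<times> second_rule \<times> (tuple \<times> tuple \<Rightarrow> 'r)"

context unit_effect
begin

definition history_classical_part :: "(nat \<times> nat \<times> nat) list \<Rightarrow> tuple" where
  "history_classical_part h = restrict (\<lambda>i. if i < 2 then 0 else output_at h i) {..<m}"

definition two_stage_strategy ::
    "first_rule \<Rightarrow> second_rule \<Rightarrow> strategy" where
  "two_stage_strategy F1 F2 h =
    (let c = history_classical_part h in
     if length h < n then (length h + 2, 0)
     else if length h = n then F1 c
     else if length h = n + 1 then (1 - fst (F1 c), F2 (c, F1 c, output_at h (fst (F1 c))))
     else (0, 0))"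

definition first_choices :: "(nat \<times> nat) set" where
  "first_choices = ({0} \<times> {..<nx 0}) \<union> ({1} \<times> {..<nx 1})"

definition classical_parts :: "tuple set" where
  "classical_parts = classical_part ` OUTS"

definition second_contexts :: "(tuple \<times> (nat \<times> nat) \<times> nat) set" where
  "second_contexts = classical_parts \<times> (SIGMA bq:first_choices. {..<na (fst bq)})"

definition second_inputs :: "tuple \<times> (nat \<times> nat) \<times> nat \<Rightarrow> nat set" where
  "second_inputs d = {..<nx (1 - fst (fst (snd d)))}"

definition inputs_of :: "nat \<times> nat \<Rightarrow> nat \<Rightarrow> tuple" where
  "inputs_of bq w = (if fst bq = 0 then input_pair (snd bq) w else input_pair w (snd bq))"

abbreviation first_choice :: "first_rule \<Rightarrow> tuple \<Rightarrow> nat \<times> nat" where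
  "first_choice F1 a \<equiv> F1 (classical_part a)"

abbreviation first_entry :: "first_rule \<Rightarrow> tuple \<Rightarrow> nat \<times> nat \<times> nat" where
  "first_entry F1 a \<equiv> (fst (first_choice F1 a), snd (first_choice F1 a), a (fst (first_choice F1 a)))"

abbreviation second_input ::
    "first_rule \<Rightarrow> second_rule \<Rightarrow> tuple \<Rightarrow> nat" where
  "second_input F1 F2 a \<equiv> F2 (classical_part a, first_choice F1 a, a (fst (first_choice F1 a)))"

abbreviation strategy_inputs ::
    "first_rule \<Rightarrow> second_rule \<Rightarrow> tuple \<Rightarrow> tuple" where
  "strategy_inputs F1 F2 a \<equiv> inputs_of (first_choice F1 a) (second_input F1 F2 a)"

lemma first_choices_box: "bq \<in> first_choices \<Longrightarrow> fst bq < 2"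
  and first_choices_input: "bq \<in> first_choices \<Longrightarrow> snd bq < nx (fst bq)"
  by (auto simp: first_choices_def)

lemma run_classical_prefix: "k \<le> n \<Longrightarrow> run (two_stage_strategy F1 F2) a k = classical_prefix a k"
  by (induction k) (auto simp: two_stage_strategy_def Let_def)

lemma history_classical_part_prefix:
  assumes a: "a \<in> OUTS" and t: "\<forall>e\<in>set t. fst e < 2"
  shows "history_classical_part (classical_prefix a n @ t) = classical_part a"
proof
  fix i
  have "filter (\<lambda>e. fst e = i) t = []" if "2 \<le> i"
    using t that by (auto simp: filter_empty_conv)
  then show "history_classical_part (classical_prefix a n @ t) i = classical_part a i"
    using outs_undefined[OF a]
    by (cases "i < 2") (auto simp: history_classical_part_def classical_part_def output_at_def
        filter_classical_prefix)
qed

lemma output_at_classical_prefix: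
  "b < 2 \<Longrightarrow> output_at (classical_prefix a n @ [e]) b = (if fst e = b then snd (snd e) else output_at [] b)"
  by (auto simp: output_at_def filter_classical_prefix)

context
  fixes F1 F2
  assumes F1: "F1 \<in> PiE classical_parts (\<lambda>_. first_choices)"
    and F2: "F2 \<in> PiE second_contexts second_inputs"
begin

lemma F1_first_choice: "a \<in> OUTS \<Longrightarrow> first_choice F1 a \<in> first_choices"
  using F1 by (auto simp: classical_parts_def PiE_iff)

lemma F2_second_input:
  assumes a: "a \<in> OUTS"
  shows "second_input F1 F2 a < nx (1 - fst (first_choice F1 a))"
proof -
  have "(classical_part a, first_choice F1 a, a (fst (first_choice F1 a))) \<in> second_contexts"
    using F1_first_choice[OF a] outs_lt[OF a, of "fst (first_choice F1 a)"]
      first_choices_box[OF F1_first_choice[OF a]] a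
    by (auto simp: second_contexts_def classical_parts_def)
  then show ?thesis using F2 by (auto simp: PiE_iff second_inputs_def)
qed

lemma run_first_stage:
  "a \<in> OUTS \<Longrightarrow> run (two_stage_strategy F1 F2) a (Suc n) = classical_prefix a n @ [first_entry F1 a]"
  using run_classical_prefix[of n F1 F2 a] history_classical_part_prefix[of a "[]"]
  by (simp add: two_stage_strategy_def Let_def)

lemma run_second_stage:
  assumes a: "a \<in> OUTS"
  shows "run (two_stage_strategy F1 F2) a (n + 2) = classical_prefix a n @
     [first_entry F1 a, (1 - fst (first_choice F1 a), second_input F1 F2 a, a (1 - fst (first_choice F1 a)))]"
proof -
  have b: "fst (first_choice F1 a) < 2" using first_choices_box[OF F1_first_choice[OF a]] .
  then have "history_classical_part (classical_prefix a n @ [first_entry F1 a]) = classical_part a"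
    using history_classical_part_prefix[OF a] by simp
  moreover have "output_at (classical_prefix a n @ [first_entry F1 a]) (fst (first_choice F1 a)) =
      a (fst (first_choice F1 a))"
    using output_at_classical_prefix[OF b] by simp
  moreover have "run (two_stage_strategy F1 F2) a (n + 2) =
      (let h = run (two_stage_strategy F1 F2) a (Suc n) in
       h @ [(fst (two_stage_strategy F1 F2 h), snd (two_stage_strategy F1 F2 h),
             a (fst (two_stage_strategy F1 F2 h)))])"
    using run.simps(2) by (metis add_2_eq_Suc')
  ultimately show ?thesis
    unfolding run_first_stage[OF a] by (simp add: two_stage_strategy_def Let_def)
qed

lemma inputs_used_two_stage:
  assumes a: "a \<in> OUTS"
  shows "inputs_used m (two_stage_strategy F1 F2) a = strategy_inputs F1 F2 a"
proof
  fix i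
  define bq where "bq = first_choice F1 a"
  define w where "w = second_input F1 F2 a"
  have b: "fst bq < 2" using first_choices_box[OF F1_first_choice[OF a]] by (simp add: bq_def)
  have run_m: "run (two_stage_strategy F1 F2) a m =
      classical_prefix a n @ [(fst bq, snd bq, a (fst bq)), (1 - fst bq, w, a (1 - fst bq))]"
    using run_second_stage[OF a] by (simp add: bq_def w_def)
  show "inputs_used m (two_stage_strategy F1 F2) a i = inputs_of (first_choice F1 a) w i"
  proof (cases "i < m")
    case True
    show ?thesis
    proof (cases "i < 2")
      case True
      then have "i = 0 \<or> i = 1" by auto
      then show ?thesis
        using b \<open>i < m\<close> unfolding bq_def[symmetric]
        by (cases "fst bq = 0")
           (auto simp: inputs_used_def run_m input_at_def filter_classical_prefix inputs_of_def)
    next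
      case False
      then show ?thesis
        using \<open>i < m\<close> unfolding bq_def[symmetric]
        by (auto simp: inputs_used_def run_m input_at_def filter_classical_prefix inputs_of_def
            input_pair_def)
    qed
  next
    case False
    then show ?thesis by (auto simp: inputs_used_def inputs_of_def input_pair_def)
  qed
qed

lemma valid_two_stage_strategy: "valid_strategy m nx na (two_stage_strategy F1 F2)"
  unfolding valid_strategy_def Let_def
proof (intro ballI allI impI)
  fix a k assume a: "a \<in> OUTS" and k: "k < m"
  let ?h = "run (two_stage_strategy F1 F2) a k"
  have b: "fst (first_choice F1 a) < 2" using first_choices_box[OF F1_first_choice[OF a]] .
  consider "k < n" | "k = n" | "k = Suc n" using k by linarith
  then show "fst (two_stage_strategy F1 F2 ?h) < m \<and> fst (two_stage_strategy F1 F2 ?h) \<notin> fst ` set ?h \<and>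
      snd (two_stage_strategy F1 F2 ?h) < nx (fst (two_stage_strategy F1 F2 ?h))"
  proof cases
    case 1
    then show ?thesis
      using run_classical_prefix[of k F1 F2 a] classical by (auto simp: two_stage_strategy_def Let_def)
  next
    case 2
    then show ?thesis
      using run_classical_prefix[of n F1 F2 a] history_classical_part_prefix[OF a, of "[]"] b
        first_choices_input[OF F1_first_choice[OF a]]
      by (auto simp: two_stage_strategy_def Let_def)
  next
    case 3
    let ?L = "classical_prefix a n @ [first_entry F1 a]"
    have c: "history_classical_part ?L = classical_part a"
      using history_classical_part_prefix[OF a] b by simp
    have o: "output_at ?L (fst (first_choice F1 a)) = a (fst (first_choice F1 a))"
      using output_at_classical_prefix[OF b] by simp
    have "fst ` set ?L = {j + 2 | j. j < n} \<union> {fst (first_choice F1 a)}"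
      by (auto simp: image_iff)
    moreover have "1 - fst (first_choice F1 a) \<noteq> fst (first_choice F1 a)"
      using b by arith
    ultimately have "1 - fst (first_choice F1 a) \<notin> fst ` set ?L"
      using b by auto
    moreover have "run (two_stage_strategy F1 F2) a k = ?L"
      using run_first_stage[OF a] 3 by simp
    ultimately show ?thesis
      using c o b F2_second_input[OF a] by (simp add: two_stage_strategy_def Let_def)
  qed
qed

end

end

section \<open>Random two-stage strategies\<close>

lemma sum_PiE_prod_marginal:
  fixes \<pi> :: "'a \<Rightarrow> 'b \<Rightarrow> real"
  assumes A: "finite A" and d: "d \<in> A" and B: "\<And>d'. d' \<in> A \<Longrightarrow> finite (B d')"
    and s: "\<And>d'. d' \<in> A \<Longrightarrow> (\<Sum>v\<in>B d'. \<pi> d' v) = 1"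
  shows "(\<Sum>f\<in>PiE A B. (\<Prod>d'\<in>A. \<pi> d' (f d')) * G (f d)) = (\<Sum>v\<in>B d. \<pi> d v * G v)"
proof -
  define F where "F = (\<lambda>d' v. \<pi> d' v * (if d' = d then G v else 1))"
  have "(\<Prod>d'\<in>A. sum (F d') (B d')) = (\<Sum>g\<in>PiE A B. \<Prod>d'\<in>A. F d' (g d'))"
    by (rule prod_sum_PiE[OF A B])
  moreover have "(\<Prod>d'\<in>A. sum (F d') (B d')) = (\<Sum>v\<in>B d. \<pi> d v * G v)"
  proof -
    have "(\<Prod>d'\<in>A. sum (F d') (B d')) = sum (F d) (B d) * (\<Prod>d'\<in>A - {d}. sum (F d') (B d'))"
      using A d by (simp add: prod.remove)
    also have "(\<Prod>d'\<in>A - {d}. sum (F d') (B d')) = 1"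
      by (rule prod.neutral) (auto simp: F_def s)
    finally show ?thesis by (simp add: F_def)
  qed
  moreover have "(\<Prod>d'\<in>A. F d' (g d')) = (\<Prod>d'\<in>A. \<pi> d' (g d')) * G (g d)" for g
  proof -
    have "(\<Prod>d'\<in>A. F d' (g d')) =
        (\<Prod>d'\<in>A. \<pi> d' (g d')) * (\<Prod>d'\<in>A. if d' = d then G (g d') else 1)"
      by (simp add: F_def prod.distrib)
    also have "(\<Prod>d'\<in>A. if d' = d then G (g d') else 1) = G (g d)"
      using A d by (simp add: prod.delta)
    finally show ?thesis .
  qed
  ultimately show ?thesis by simp
qed

lemma sum_PiE_prod_eq_1:
  fixes \<pi> :: "'a \<Rightarrow> 'b \<Rightarrow> real"
  assumes "finite A" "\<And>d. d \<in> A \<Longrightarrow> finite (B d)" "\<And>d. d \<in> A \<Longrightarrow> (\<Sum>v\<in>B d. \<pi> d v) = 1"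
  shows "(\<Sum>f\<in>PiE A B. (\<Prod>d\<in>A. \<pi> d (f d))) = 1"
proof -
  have "(\<Prod>d\<in>A. sum (\<pi> d) (B d)) = (\<Sum>f\<in>PiE A B. \<Prod>d\<in>A. \<pi> d (f d))"
    by (rule prod_sum_PiE[OF assms(1,2)])
  then show ?thesis using assms(3) by simp
qed

lemma is_mixture_of_basic_finite_family:
  fixes P :: "'t set" and M :: "'t \<Rightarrow> 'r \<Rightarrow> state \<Rightarrow> real"
  assumes "finite P" "\<forall>t\<in>P. 0 \<le> wt t" "(\<Sum>t\<in>P. wt t) = 1"
    and "\<forall>t\<in>P. is_basic_measurement m nx na Out (M t)"
    and "\<forall>r\<in>Out. \<forall>p\<in>states m nx na. mu r p = (\<Sum>t\<in>P. wt t * M t r p)"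
  shows "is_mixture_of_basic m nx na Out mu"
proof -
  obtain e where e: "bij_betw e {..<card P} P"
    using ex_bij_betw_nat_finite[OF assms(1)] by (auto simp: atLeast0LessThan)
  then have e_in: "e j \<in> P" if "j < card P" for j
    using that by (auto simp: bij_betw_def)
  have reindex: "(\<Sum>j<card P. f (e j)) = (\<Sum>t\<in>P. f t)" for f :: "'t \<Rightarrow> real"
    using sum.reindex_bij_betw[OF e, of f] by simp
  show ?thesis
    unfolding is_mixture_of_basic_def
  proof (intro exI[of _ "card P"] exI[of _ "wt \<circ> e"] exI[of _ "M \<circ> e"] conjI allI impI ballI)
    show "(\<Sum>j<card P. (wt \<circ> e) j) = 1"
      using reindex[of wt] assms(3) by simp
    show "mu r p = (\<Sum>j<card P. (wt \<circ> e) j * (M \<circ> e) j r p)"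
      if "r \<in> Out" "p \<in> states m nx na" for r p
      using reindex[of "\<lambda>t. wt t * M t r p"] assms(5) that by simp
    show "0 \<le> (wt \<circ> e) j" "is_basic_measurement m nx na Out ((M \<circ> e) j)" if "j < card P" for j
      using assms(2,4) e_in[OF that] by simp_all
  qed
qed

context unit_effect
begin

lemma sum_first_choices: "(\<Sum>bq\<in>first_choices. f bq) = (\<Sum>w<nx 0. f (0, w)) + (\<Sum>w<nx 1. f (1, w))"
proof -
  have "first_choices = Pair 0 ` {..<nx 0} \<union> Pair 1 ` {..<nx 1}"
    by (auto simp: first_choices_def)
  then have "(\<Sum>bq\<in>first_choices. f bq) =
      (\<Sum>bq\<in>Pair 0 ` {..<nx 0}. f bq) + (\<Sum>bq\<in>Pair 1 ` {..<nx 1}. f bq)"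
    by (simp only:) (rule sum.union_disjoint, auto)
  then show ?thesis
    by (simp add: sum.reindex inj_on_def)
qed

lemma finite_first_choices: "finite first_choices"
  by (simp add: first_choices_def)

lemma finite_classical_parts: "finite classical_parts"
  by (simp add: classical_parts_def finite_outs)

lemma finite_second_contexts: "finite second_contexts"
  using finite_classical_parts finite_first_choices by (simp add: second_contexts_def)

lemma finite_second_inputs: "finite (second_inputs d)"
  by (simp add: second_inputs_def)

lemma classical_parts_outs: "c \<in> classical_parts \<Longrightarrow> c \<in> OUTS"
  by (auto simp: classical_parts_def classical_part_in_outs)

lemma second_context_in:
  "a \<in> OUTS \<Longrightarrow> bq \<in> first_choices \<Longrightarrow> (classical_part a, bq, a (fst bq)) \<in> second_contexts"
  using outs_lt[of a "fst bq"] first_choices_box[of bq]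
  by (auto simp: second_contexts_def classical_parts_def)

text \<open>The first measurement is box 0 with input \<open>u\<close> with probability \<open>prob0 c u\<close>, or box 1 with
  input \<open>v\<close> with probability \<open>prob1 c v\<close>. After output \<open>y\<close> of box 0, the input \<open>v\<close> of box 1 is
  chosen with probability \<open>weight0 (c(0 := y)) u v / prob0 c u\<close>, and symmetrically; a vanishing
  denominator makes the choice irrelevant, and the input \<open>0\<close> is taken.\<close>

definition first_prob :: "tuple \<Rightarrow> nat \<times> nat \<Rightarrow> real" where
  "first_prob c bq = (if fst bq = 0 then prob0 c (snd bq) else prob1 c (snd bq))"

definition second_prob :: "tuple \<times> (nat \<times> nat) \<times> nat \<Rightarrow> nat \<Rightarrow> real" where
  "second_prob d w = (case d of (c, (b, u), y) \<Rightarrow>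
     if b = 0 then
       (if prob0 c u = 0 then (if w = 0 then 1 else 0) else weight0 (c(0 := y)) u w / prob0 c u)
     else
       (if prob1 c u = 0 then (if w = 0 then 1 else 0) else weight1 (c(1 := y)) w u / prob1 c u))"

lemma first_prob_sum: "c \<in> classical_parts \<Longrightarrow> (\<Sum>bq\<in>first_choices. first_prob c bq) = 1"
  using prob0_prob1_sum[OF classical_parts_outs] by (simp add: sum_first_choices first_prob_def)

lemma first_prob_nonneg: "c \<in> classical_parts \<Longrightarrow> bq \<in> first_choices \<Longrightarrow> 0 \<le> first_prob c bq"
  using classical_parts_outs prob0_nonneg prob1_nonneg by (auto simp: first_prob_def first_choices_def)

lemma second_contexts_cases:
  assumes "d \<in> second_contexts"
  obtains (box0) c u y where "d = (c, (0, u), y)" "c \<in> OUTS" "u < nx 0" "y < na 0"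
  | (box1) c v y where "d = (c, (1, v), y)" "c \<in> OUTS" "v < nx 1" "y < na 1"
  using assms classical_parts_outs by (auto simp: second_contexts_def first_choices_def)

lemma second_prob_sum:
  assumes "d \<in> second_contexts"
  shows "(\<Sum>w\<in>second_inputs d. second_prob d w) = 1"
  using assms
proof (cases rule: second_contexts_cases)
  case (box0 c u y)
  show ?thesis
  proof (cases "prob0 c u = 0")
    case True
    then show ?thesis using nx_pos by (simp add: box0(1) second_prob_def second_inputs_def)
  next
    case False
    have "(\<Sum>w<nx 1. weight0 (c(0 := y)) u w) = prob0 c u"
      using prob0_upd0[OF box0(2,4,3)] by (simp add: prob0_def)
    then show ?thesis
      using False by (simp add: box0(1) second_prob_def second_inputs_def flip: sum_divide_distrib)
  qed
next
  case (box1 c v y)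
  show ?thesis
  proof (cases "prob1 c v = 0")
    case True
    then show ?thesis using nx_pos by (simp add: box1(1) second_prob_def second_inputs_def)
  next
    case False
    have "(\<Sum>w<nx 0. weight1 (c(1 := y)) w v) = prob1 c v"
      using prob1_upd1[OF box1(2,4,3)] by (simp add: prob1_def)
    then show ?thesis
      using False by (simp add: box1(1) second_prob_def second_inputs_def flip: sum_divide_distrib)
  qed
qed

lemma second_prob_nonneg:
  assumes "d \<in> second_contexts" "w \<in> second_inputs d"
  shows "0 \<le> second_prob d w"
  using assms(1)
proof (cases rule: second_contexts_cases)
  case (box0 c u y)
  then show ?thesis
    using assms(2) prob0_nonneg[OF box0(2,3)] weight0_nonneg[OF outs_upd0[OF box0(2,4)] box0(3)]
    by (auto simp: second_prob_def second_inputs_def)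
next
  case (box1 c v y)
  then show ?thesis
    using prob1_nonneg[OF box1(2)] weight1_nonneg[OF outs_upd1[OF box1(2,4)]]
    by (auto simp: second_prob_def)
qed

abbreviation first_strategies :: "first_rule set" where
  "first_strategies \<equiv> PiE classical_parts (\<lambda>_. first_choices)"

abbreviation second_strategies :: "second_rule set" where
  "second_strategies \<equiv> PiE second_contexts second_inputs"

definition strategy_weight ::
    "first_rule \<Rightarrow> second_rule \<Rightarrow> real" where
  "strategy_weight F1 F2 =
     (\<Prod>c\<in>classical_parts. first_prob c (F1 c)) * (\<Prod>d\<in>second_contexts. second_prob d (F2 d))"

definition reach_prob :: "tuple \<Rightarrow> tuple \<Rightarrow> nat \<times> nat \<Rightarrow> real" where
  "reach_prob a x bq = (\<Sum>w2\<in>second_inputs (classical_part a, bq, a (fst bq)).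
     second_prob (classical_part a, bq, a (fst bq)) w2 * (if x = inputs_of bq w2 then 1 else 0))"

lemma strategy_weight_nonneg:
  "F1 \<in> first_strategies \<Longrightarrow> F2 \<in> second_strategies \<Longrightarrow> 0 \<le> strategy_weight F1 F2"
  unfolding strategy_weight_def
  by (intro mult_nonneg_nonneg prod_nonneg) (auto intro: first_prob_nonneg second_prob_nonneg)

lemma sum_strategy_weight: "(\<Sum>F1\<in>first_strategies. \<Sum>F2\<in>second_strategies. strategy_weight F1 F2) = 1"
  using sum_PiE_prod_eq_1[OF finite_classical_parts finite_first_choices first_prob_sum]
    sum_PiE_prod_eq_1[OF finite_second_contexts finite_second_inputs second_prob_sum]
  by (simp add: strategy_weight_def flip: sum_distrib_left sum_distrib_right)

lemma sum_strategy_weight_reach: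
  assumes a: "a \<in> OUTS"
  shows "(\<Sum>F1\<in>first_strategies. \<Sum>F2\<in>second_strategies.
      strategy_weight F1 F2 * (if x = strategy_inputs F1 F2 a then 1 else 0)) =
    (\<Sum>bq\<in>first_choices. first_prob (classical_part a) bq * reach_prob a x bq)"
proof -
  have "(\<Sum>F2\<in>second_strategies. strategy_weight F1 F2 * (if x = strategy_inputs F1 F2 a then 1 else 0)) =
      (\<Prod>c\<in>classical_parts. first_prob c (F1 c)) * reach_prob a x (first_choice F1 a)"
    if F1: "F1 \<in> first_strategies" for F1
  proof -
    have bq: "first_choice F1 a \<in> first_choices" using F1 a by (auto simp: classical_parts_def PiE_iff)
    show ?thesis
      unfolding strategy_weight_def reach_prob_def
      using sum_PiE_prod_marginal[OF finite_second_contexts second_context_in[OF a bq]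
          finite_second_inputs second_prob_sum,
          where G = "\<lambda>w2. if x = inputs_of (first_choice F1 a) w2 then 1 else 0"]
      by (simp add: mult.assoc flip: sum_distrib_left)
  qed
  then have "(\<Sum>F1\<in>first_strategies. \<Sum>F2\<in>second_strategies.
      strategy_weight F1 F2 * (if x = strategy_inputs F1 F2 a then 1 else 0)) =
      (\<Sum>F1\<in>first_strategies.
        (\<Prod>c\<in>classical_parts. first_prob c (F1 c)) * reach_prob a x (first_choice F1 a))"
    by (rule sum.cong[OF refl])
  also have "\<dots> = (\<Sum>bq\<in>first_choices. first_prob (classical_part a) bq * reach_prob a x bq)"
    by (rule sum_PiE_prod_marginal[OF finite_classical_parts _ finite_first_choices first_prob_sum])
       (simp add: classical_parts_def a)
  finally show ?thesis .
qed

lemma reach_prob_first0: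
  assumes a: "a \<in> OUTS" and u: "u < nx 0" and v: "v < nx 1"
  shows "(\<Sum>w<nx 0. first_prob (classical_part a) (0, w) * reach_prob a (input_pair u v) (0, w)) =
    weight0 a u v"
proof -
  have "reach_prob a (input_pair u v) (0, w) = 0" if "w \<noteq> u" for w
    using that by (auto simp: reach_prob_def second_inputs_def inputs_of_def)
  then have "(\<Sum>w<nx 0. first_prob (classical_part a) (0, w) * reach_prob a (input_pair u v) (0, w)) =
      first_prob (classical_part a) (0, u) * reach_prob a (input_pair u v) (0, u)"
    by (intro sum_lessThan_eq_single[OF u]) simp
  also have "reach_prob a (input_pair u v) (0, u) =
      (\<Sum>w2<nx 1. second_prob (classical_part a, (0, u), a 0) w2 * (if v = w2 then 1 else 0))"
    by (simp add: reach_prob_def second_inputs_def inputs_of_def)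
  also have "\<dots> = second_prob (classical_part a, (0, u), a 0) v"
    by (rule trans[OF sum_lessThan_eq_single[OF v]]) auto
  also have "first_prob (classical_part a) (0, u) * second_prob (classical_part a, (0, u), a 0) v =
      weight0 a u v"
  proof (cases "prob0 (classical_part a) u = 0")
    case True
    then show ?thesis using weight0_eq_0[OF a u v] prob0_classical_part[OF a u] by (simp add: first_prob_def)
  next
    case False
    then show ?thesis by (simp add: first_prob_def second_prob_def weight0_classical_part[OF a u v])
  qed
  finally show ?thesis .
qed

lemma reach_prob_first1:
  assumes a: "a \<in> OUTS" and u: "u < nx 0" and v: "v < nx 1"
  shows "(\<Sum>w<nx 1. first_prob (classical_part a) (1, w) * reach_prob a (input_pair u v) (1, w)) =
    weight1 a u v"
proof -
  have "reach_prob a (input_pair u v) (1, w) = 0" if "w \<noteq> v" for w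
    using that by (auto simp: reach_prob_def second_inputs_def inputs_of_def)
  then have "(\<Sum>w<nx 1. first_prob (classical_part a) (1, w) * reach_prob a (input_pair u v) (1, w)) =
      first_prob (classical_part a) (1, v) * reach_prob a (input_pair u v) (1, v)"
    by (intro sum_lessThan_eq_single[OF v]) simp
  also have "reach_prob a (input_pair u v) (1, v) =
      (\<Sum>w2<nx 0. second_prob (classical_part a, (1, v), a 1) w2 * (if u = w2 then 1 else 0))"
    by (simp add: reach_prob_def second_inputs_def inputs_of_def)
  also have "\<dots> = second_prob (classical_part a, (1, v), a 1) u"
    by (rule trans[OF sum_lessThan_eq_single[OF u]]) auto
  also have "first_prob (classical_part a) (1, v) * second_prob (classical_part a, (1, v), a 1) u =
      weight1 a u v"
  proof (cases "prob1 (classical_part a) v = 0")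
    case True
    then show ?thesis using weight1_eq_0[OF a u] prob1_classical_part[OF a v] by (simp add: first_prob_def)
  next
    case False
    then show ?thesis by (simp add: first_prob_def second_prob_def weight1_classical_part)
  qed
  finally show ?thesis .
qed

lemma sum_strategy_weight_inputs:
  assumes a: "a \<in> OUTS" and x: "x \<in> INS"
  shows "(\<Sum>F1\<in>first_strategies. \<Sum>F2\<in>second_strategies.
      strategy_weight F1 F2 * (if x = strategy_inputs F1 F2 a then 1 else 0)) = T a x"
proof -
  obtain u v where "x = input_pair u v" "u < nx 0" "v < nx 1"
    using x ins_eq_input_pair ins_lt0 ins_lt1 by metis
  then show ?thesis
    unfolding sum_strategy_weight_reach[OF a] sum_first_choices
    using reach_prob_first0[OF a] reach_prob_first1[OF a] T_eq_weights[of a u v] by simp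
qed

lemma inputs_of_in_ins: "bq \<in> first_choices \<Longrightarrow> w2 < nx (1 - fst bq) \<Longrightarrow> inputs_of bq w2 \<in> INS"
  by (auto simp: first_choices_def inputs_of_def intro!: input_pair_in_ins)

text \<open>The outcome is finally drawn with probability \<open>RR r a x / T a x\<close> given the outputs \<open>a\<close>
  and the inputs \<open>x\<close> used; where \<open>T a x = 0\<close> the choice is irrelevant and \<open>r0\<close> is taken.\<close>

context
  fixes Out :: "'r set" and RR :: "'r \<Rightarrow> tuple \<Rightarrow> tuple \<Rightarrow> real" and r0 :: 'r
  assumes finite_Out: "finite Out" and r0: "r0 \<in> Out"
    and RR_nonneg: "\<forall>r\<in>Out. \<forall>a\<in>OUTS. \<forall>x\<in>INS. 0 \<le> RR r a x"
    and T_eq_sum: "\<forall>a\<in>OUTS. \<forall>x\<in>INS. T a x = (\<Sum>r\<in>Out. RR r a x)"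
begin

definition outcome_prob :: "tuple \<times> tuple \<Rightarrow> 'r \<Rightarrow> real" where
  "outcome_prob ax r = (if T (fst ax) (snd ax) = 0 then (if r = r0 then 1 else 0)
     else RR r (fst ax) (snd ax) / T (fst ax) (snd ax))"

lemma outcome_prob_sum:
  assumes "ax \<in> OUTS \<times> INS"
  shows "(\<Sum>r\<in>Out. outcome_prob ax r) = 1"
proof (cases "T (fst ax) (snd ax) = 0")
  case True
  then show ?thesis using finite_Out r0 by (simp add: outcome_prob_def)
next
  case False
  then show ?thesis
    using T_eq_sum assms by (auto simp: outcome_prob_def sum_divide_distrib[symmetric])
qed

lemma outcome_prob_nonneg: "ax \<in> OUTS \<times> INS \<Longrightarrow> r \<in> Out \<Longrightarrow> 0 \<le> outcome_prob ax r"
  using RR_nonneg T_nonneg by (auto simp: outcome_prob_def)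

lemma T_mult_outcome_prob:
  assumes "a \<in> OUTS" "x \<in> INS" "r \<in> Out"
  shows "T a x * outcome_prob (a, x) r = RR r a x"
proof (cases "T a x = 0")
  case True
  have "RR r a x \<le> (\<Sum>r\<in>Out. RR r a x)"
    using finite_Out assms RR_nonneg by (intro member_le_sum) auto
  then have "RR r a x = 0" using True T_eq_sum RR_nonneg assms by force
  then show ?thesis using True by simp
qed (simp add: outcome_prob_def)

definition choice_functions ::
    "('r choice) set" where
  "choice_functions = first_strategies \<times> second_strategies \<times> PiE (OUTS \<times> INS) (\<lambda>_. Out)"

definition choice_weight ::
    "'r choice \<Rightarrow> real" where
  "choice_weight =
     (\<lambda>(F1, F2, F3). strategy_weight F1 F2 * (\<Prod>ax\<in>OUTS \<times> INS. outcome_prob ax (F3 ax)))"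

definition choice_effect ::
    "'r choice \<Rightarrow> 'r \<Rightarrow> state \<Rightarrow> real" where
  "choice_effect = (\<lambda>(F1, F2, F3). basic_effect m nx na (two_stage_strategy F1 F2)
     (\<lambda>a. F3 (a, inputs_used m (two_stage_strategy F1 F2) a)))"

lemma finite_choice_functions: "finite choice_functions"
  unfolding choice_functions_def
  using finite_classical_parts finite_first_choices finite_second_contexts finite_second_inputs
    finite_outs finite_ins finite_Out
  by (intro finite_cartesian_product finite_PiE) auto

lemma sum_choice_functions:
  "(\<Sum>t\<in>choice_functions. f t) =
    (\<Sum>F1\<in>first_strategies. \<Sum>F2\<in>second_strategies.
      \<Sum>F3\<in>PiE (OUTS \<times> INS) (\<lambda>_. Out). f (F1, F2, F3))"
  by (simp add: choice_functions_def sum.cartesian_product)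

lemma choice_weight_nonneg: "t \<in> choice_functions \<Longrightarrow> 0 \<le> choice_weight t"
  by (auto simp: choice_functions_def choice_weight_def PiE_iff
      intro!: mult_nonneg_nonneg strategy_weight_nonneg prod_nonneg outcome_prob_nonneg)

lemma sum_choice_weight: "(\<Sum>t\<in>choice_functions. choice_weight t) = 1"
proof -
  have "(\<Sum>F3\<in>PiE (OUTS \<times> INS) (\<lambda>_. Out). \<Prod>ax\<in>OUTS \<times> INS. outcome_prob ax (F3 ax)) = 1"
    using sum_PiE_prod_eq_1[OF finite_cartesian_product[OF finite_outs finite_ins] finite_Out]
      outcome_prob_sum by blast
  then show ?thesis
    using sum_strategy_weight
    by (simp add: sum_choice_functions choice_weight_def flip: sum_distrib_left)
qed

lemma choice_effect_basic: "t \<in> choice_functions \<Longrightarrow> is_basic_measurement m nx na Out (choice_effect t)"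
proof -
  assume "t \<in> choice_functions"
  then obtain F1 F2 F3 where t: "t = (F1, F2, F3)" and F1: "F1 \<in> first_strategies"
    and F2: "F2 \<in> second_strategies" and F3: "F3 \<in> PiE (OUTS \<times> INS) (\<lambda>_. Out)"
    by (auto simp: choice_functions_def)
  have "F3 (a, inputs_used m (two_stage_strategy F1 F2) a) \<in> Out" if "a \<in> OUTS" for a
    using F3 that inputs_used_two_stage[OF F1 F2 that]
      inputs_of_in_ins[OF F1_first_choice[OF F1 F2 that] F2_second_input[OF F1 F2 that]]
    by auto
  then show ?thesis
    unfolding is_basic_measurement_def t choice_effect_def prod.case
    using valid_two_stage_strategy[OF F1 F2]
    by (intro exI[of _ "two_stage_strategy F1 F2"]
        exI[of _ "\<lambda>a. F3 (a, inputs_used m (two_stage_strategy F1 F2) a)"]) simp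
qed

lemma choice_effect_eq:
  assumes "t = (F1, F2, F3)" "F1 \<in> first_strategies" "F2 \<in> second_strategies"
  shows "choice_effect t r p = (\<Sum>a\<in>OUTS. \<Sum>x\<in>INS.
    p a x * ((if x = strategy_inputs F1 F2 a then 1 else 0) * (if F3 (a, x) = r then 1 else 0)))"
  unfolding assms(1) choice_effect_def prod.case basic_effect_def
  by (intro sum.cong refl) (auto simp: inputs_used_two_stage[OF assms(2,3)])

lemma sum_choice_weight_effect:
  assumes r: "r \<in> Out"
  shows "(\<Sum>t\<in>choice_functions. choice_weight t * choice_effect t r p) =
    (\<Sum>a\<in>OUTS. \<Sum>x\<in>INS. p a x * RR r a x)"
proof -
  define K where "K = (\<lambda>t a x. case t of (F1, F2, F3) \<Rightarrow>
    (if x = strategy_inputs F1 F2 a then 1 else 0) * (if F3 (a, x) = r then 1 else (0::real)))"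
  have "(\<Sum>t\<in>choice_functions. choice_weight t * choice_effect t r p) =
      (\<Sum>t\<in>choice_functions. \<Sum>a\<in>OUTS. \<Sum>x\<in>INS. p a x * (choice_weight t * K t a x))"
    by (rule sum.cong[OF refl])
       (auto simp: choice_functions_def choice_effect_eq K_def sum_distrib_left algebra_simps)
  also have "\<dots> = (\<Sum>a\<in>OUTS. \<Sum>x\<in>INS. p a x * (\<Sum>t\<in>choice_functions. choice_weight t * K t a x))"
    by (simp only: sum.swap[where A = choice_functions] sum_distrib_left)
  also have "\<dots> = (\<Sum>a\<in>OUTS. \<Sum>x\<in>INS. p a x * RR r a x)"
  proof (intro sum.cong refl arg_cong2[where f = "(*)"])
    fix a x assume a: "a \<in> OUTS" and x: "x \<in> INS"
    have "(\<Sum>F3\<in>PiE (OUTS \<times> INS) (\<lambda>_. Out).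
        (\<Prod>ax\<in>OUTS \<times> INS. outcome_prob ax (F3 ax)) * (if F3 (a, x) = r then 1 else 0)) =
        (\<Sum>r'\<in>Out. outcome_prob (a, x) r' * (if r' = r then 1 else 0))"
      using a x finite_outs finite_ins
      by (intro sum_PiE_prod_marginal) (auto simp: finite_Out outcome_prob_sum)
    also have "\<dots> = outcome_prob (a, x) r"
      using r finite_Out by (simp add: if_distrib cong: if_cong)
    finally have outcome: "(\<Sum>F3\<in>PiE (OUTS \<times> INS) (\<lambda>_. Out).
        (\<Prod>ax\<in>OUTS \<times> INS. outcome_prob ax (F3 ax)) * (if F3 (a, x) = r then 1 else 0)) =
        outcome_prob (a, x) r" .
    have inner: "(\<Sum>F3\<in>PiE (OUTS \<times> INS) (\<lambda>_. Out). choice_weight (F1, F2, F3) * K (F1, F2, F3) a x) =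
        strategy_weight F1 F2 * (if x = strategy_inputs F1 F2 a then 1 else 0) * outcome_prob (a, x) r"
      for F1 F2
      unfolding outcome[symmetric] by (simp add: choice_weight_def K_def sum_distrib_left mult_ac)
    have "(\<Sum>t\<in>choice_functions. choice_weight t * K t a x) =
        (\<Sum>F1\<in>first_strategies. \<Sum>F2\<in>second_strategies.
          strategy_weight F1 F2 * (if x = strategy_inputs F1 F2 a then 1 else 0)) * outcome_prob (a, x) r"
      unfolding sum_choice_functions inner by (simp add: sum_distrib_right)
    also have "\<dots> = RR r a x"
      using sum_strategy_weight_inputs[OF a x] T_mult_outcome_prob[OF a x r] by simp
    finally show "(\<Sum>t\<in>choice_functions. choice_weight t * K t a x) = RR r a x" .
  qed
  finally show ?thesis .
qed

lemma decomposition_is_mixture: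
  assumes "\<forall>r\<in>Out. \<forall>p\<in>states m nx na. mu r p = (\<Sum>a\<in>OUTS. \<Sum>x\<in>INS. p a x * RR r a x)"
  shows "is_mixture_of_basic m nx na Out mu"
  using assms sum_choice_weight_effect
  by (intro is_mixture_of_basic_finite_family[OF finite_choice_functions, where wt = choice_weight
        and M = choice_effect])
     (auto intro: choice_weight_nonneg choice_effect_basic simp: sum_choice_weight)

end

end

lemma measurement_nonneg_representation:
  assumes "is_measurement m nx na Out mu"
  obtains RR where "\<forall>r\<in>Out. \<forall>a\<in>outs m na. \<forall>x\<in>ins m nx. 0 \<le> RR r a x"
    and "\<forall>r\<in>Out. \<forall>p\<in>states m nx na. mu r p = (\<Sum>a\<in>outs m na. \<Sum>x\<in>ins m nx. p a x * RR r a x)"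
proof -
  have "\<forall>r\<in>Out. \<exists>R. (\<forall>a\<in>outs m na. \<forall>x\<in>ins m nx. 0 \<le> R a x) \<and>
      (\<forall>p\<in>states m nx na. mu r p = (\<Sum>a\<in>outs m na. \<Sum>x\<in>ins m nx. p a x * R a x))"
    using assms effect_nonneg_representation unfolding is_measurement_def by blast
  then obtain RR where "\<forall>r\<in>Out. (\<forall>a\<in>outs m na. \<forall>x\<in>ins m nx. 0 \<le> RR r a x) \<and>
      (\<forall>p\<in>states m nx na. mu r p = (\<Sum>a\<in>outs m na. \<Sum>x\<in>ins m nx. p a x * RR r a x))"
    by (rule bchoice[elim_format]) blast
  then show thesis
    using that by blast
qed

lemma pair_sum_of_representatives:
  assumes "is_measurement m nx na Out mu"
    and "\<forall>r\<in>Out. \<forall>p\<in>states m nx na. mu r p = (\<Sum>a\<in>outs m na. \<Sum>x\<in>ins m nx. p a x * RR r a x)"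
    and "p \<in> states m nx na"
  shows "(\<Sum>a\<in>outs m na. \<Sum>x\<in>ins m nx. p a x * (\<Sum>r\<in>Out. RR r a x)) = 1"
proof -
  have "(\<Sum>a\<in>outs m na. \<Sum>x\<in>ins m nx. p a x * (\<Sum>r\<in>Out. RR r a x)) =
      (\<Sum>r\<in>Out. \<Sum>a\<in>outs m na. \<Sum>x\<in>ins m nx. p a x * RR r a x)"
    by (simp only: sum_distrib_left sum.swap[where B = Out])
  also have "\<dots> = (\<Sum>r\<in>Out. mu r p)"
    using assms(2,3) by simp
  finally show ?thesis
    using assms(1,3) by (simp add: is_measurement_def)
qed

lemma measurement_outcomes_nonempty:
  assumes "\<forall>i<m. 0 < na i" "is_measurement m nx na Out mu"
  shows "Out \<noteq> {}"
proof
  assume "Out = {}"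
  have "is_response m nx na (\<lambda>_ _. 0)"
    using assms(1) by (simp add: is_response_def)
  then have "local_det_state m (\<lambda>_ _. 0) \<in> states m nx na"
    by (rule local_det_state_in_states)
  with assms(2) \<open>Out = {}\<close> show False
    by (simp add: is_measurement_def)
qed

theorem lemma2:
  fixes n :: nat and nx na :: "nat \<Rightarrow> nat"
    and Out :: "'r set" and mu :: "'r \<Rightarrow> state \<Rightarrow> real"
  assumes "\<forall>i < n + 2. 0 < nx i \<and> 0 < na i"
    and "\<forall>i. 2 \<le> i \<and> i < n + 2 \<longrightarrow> nx i = 1"
    and "is_measurement (n + 2) nx na Out mu"
  shows "is_basic_measurement (n + 2) nx na Out mu \<or> is_mixture_of_basic (n + 2) nx na Out mu"
proof -
  obtain RR where RR_nonneg: "\<forall>r\<in>Out. \<forall>a\<in>outs (n + 2) na. \<forall>x\<in>ins (n + 2) nx. 0 \<le> RR r a x"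
    and RR: "\<forall>r\<in>Out. \<forall>p\<in>states (n + 2) nx na.
      mu r p = (\<Sum>a\<in>outs (n + 2) na. \<Sum>x\<in>ins (n + 2) nx. p a x * RR r a x)"
    using measurement_nonneg_representation[OF assms(3)] .
  interpret unit_effect n nx na "\<lambda>a x. \<Sum>r\<in>Out. RR r a x"
    using assms(1,2) RR_nonneg pair_sum_of_representatives[OF assms(3) RR]
    by unfold_locales (auto intro: sum_nonneg)
  obtain r0 where "r0 \<in> Out"
    using measurement_outcomes_nonempty assms(1,3) by blast
  have "is_mixture_of_basic (n + 2) nx na Out mu"
    by (rule decomposition_is_mixture[OF _ \<open>r0 \<in> Out\<close> RR_nonneg _ RR])
       (use assms(3) in \<open>auto simp: is_measurement_def\<close>)
  then show ?thesis ..
qed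

end
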